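(* Let $A$ be a basic connected finite dimensional algebra over an algebraically closed field $k$ with ordinary quiver $Q$ without oriented cycles. Let $\nu\colon kQ\twoheadrightarrow A$ be a presentation with $I=\mathsf{Ker}(\nu)$, and let $\psi\colon kQ\xrightarrow{\sim}kQ$ be an automorphism with $\psi(e_i)=e_i$ for all $i$ and $\psi(I)=I$. Let $\mu:=\nu\circ\psi$ (so $\mathsf{Ker}(\mu)=I$), and let $\overline\psi\colon A\xrightarrow{\sim}A$ be the $k$-algebra automorphism with $\overline\psi\circ\mu=\mu\circ\psi$. Then $\theta_\mu=\overline\psi_*\circ\theta_\nu$. In particular $\mathsf{Im}(\theta_\mu)=\overline\psi_*(\mathsf{Im}(\theta_\nu))$.
   Context: Fix a complete set $e_1,\dots,e_n$ of primitive orthogonal idempotents of $A$ indexed by $Q_0=\{1,\dots,n\}$, $E=\bigoplus ke_i$. A presentation is a surjective algebra map $\nu\colon kQ\twoheadrightarrow A$ with admissible kernel ($(kQ^+)^N\subseteq\mathsf{Ker}\,\nu\subseteq(kQ^+)^2$ for some $N\ge2$, $kQ^+$ the arrow ideal) and $\nu(e_i)=e_i$. $\mathsf{HH}^1(A)=Der_0(A)/Int_0(A)$, with $Der_0(A)$ the Lie algebra (commutator) of derivations vanishing on all $e_i$ and $Int_0(A)=\{a\mapsto ea-ae\mid e\in E\}$. For an automorphism $\phi$ of $A$ fixing every $e_i$, $\phi_*$ is the Lie algebra automorphism of $\mathsf{HH}^1(A)$ induced by $d\mapsto\phi\circ d\circ\phi^{-1}$. Walks: paths with formal inverse arrows allowed.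 $\sim_I$ is the smallest equivalence relation on walks with $\alpha\alpha^{-1}\sim_I e_y$, $\alpha^{-1}\alpha\sim_I e_x$ for arrows $\alpha\colon x\to y$, compatible with concatenation, and identifying two paths occurring with nonzero coefficient in a same minimal relation of $I$ (a nonzero $\sum t_iu_i\in I$, $t_i\neq0$, distinct paths, no nonempty proper subsum in $I$). $\pi_1(Q,I)$ is the group of classes of closed walks at a fixed vertex $x_0$. Fix a maximal tree $T$ of $Q$, $\gamma_x$ the minimal walk in $T$ from $x_0$ to $x$. For a presentation $\nu$ with kernel $I$ and a group homomorphism $f\colon\pi_1(Q,I)\to k^+$, $\theta_\nu(f)$ is the class of the derivation $\tilde f$ with $\tilde f(\nu(u))=f([\gamma_y^{-1}u\gamma_x]_I)\nu(u)$ for paths $u$ from $x$ to $y$. *)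

theory Defs
  imports "Graph_Theory.Digraph" "HOL-Algebra.Group" "HOL-Computational_Algebra.Polynomial"
begin

definition alg_closed :: "'k::field itself \<Rightarrow> bool" where
  "alg_closed _ \<longleftrightarrow> (\<forall>p::'k poly. degree p > 0 \<longrightarrow> (\<exists>x. poly p x = 0))"

text \<open>A walk is a start vertex
  together with the list of its letters in the order of traversal; the letter
  (a, True) traverses the arrow a, the letter (a, False) its formal inverse.\<close>

type_synonym ('v,'e) walk = "'v \<times> ('e \<times> bool) list"
type_synonym ('v,'e) path = "'v \<times> 'e list"

definition lstart :: "('v,'e) pre_digraph \<Rightarrow> 'e \<times> bool \<Rightarrow> 'v" where
  "lstart G l = (if snd l then tail G (fst l) else head G (fst l))"

definition lend :: "('v,'e) pre_digraph \<Rightarrow> 'e \<times> bool \<Rightarrow> 'v" where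
  "lend G l = (if snd l then head G (fst l) else tail G (fst l))"

fun walk_ok :: "('v,'e) pre_digraph \<Rightarrow> 'v \<Rightarrow> ('e \<times> bool) list \<Rightarrow> bool" where
  "walk_ok G x [] \<longleftrightarrow> x \<in> verts G"
| "walk_ok G x (l # ls) \<longleftrightarrow> x \<in> verts G \<and> fst l \<in> arcs G \<and> lstart G l = x \<and> walk_ok G (lend G l) ls"

definition is_walk :: "('v,'e) pre_digraph \<Rightarrow> ('v,'e) walk \<Rightarrow> bool" where
  "is_walk G w \<longleftrightarrow> walk_ok G (fst w) (snd w)"

definition wend :: "('v,'e) pre_digraph \<Rightarrow> ('v,'e) walk \<Rightarrow> 'v" where
  "wend G w = (if snd w = [] then fst w else lend G (last (snd w)))"

text \<open>Concatenation written as composition: wcomp w2 w1 = w2 w1 traverses w1 first.\<close>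
definition wcomp :: "('v,'e) walk \<Rightarrow> ('v,'e) walk \<Rightarrow> ('v,'e) walk" where
  "wcomp w2 w1 = (fst w1, snd w1 @ snd w2)"

definition winv :: "('v,'e) pre_digraph \<Rightarrow> ('v,'e) walk \<Rightarrow> ('v,'e) walk" where
  "winv G w = (wend G w, rev (map (\<lambda>(a,b). (a, \<not> b)) (snd w)))"

definition path_walk :: "('v,'e) path \<Rightarrow> ('v,'e) walk" where
  "path_walk p = (fst p, map (\<lambda>a. (a, True)) (snd p))"

definition is_path :: "('v,'e) pre_digraph \<Rightarrow> ('v,'e) path \<Rightarrow> bool" where
  "is_path G p \<longleftrightarrow> is_walk G (path_walk p)"

definition pend :: "('v,'e) pre_digraph \<Rightarrow> ('v,'e) path \<Rightarrow> 'v" where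
  "pend G p = wend G (path_walk p)"

definition quiver_connected :: "('v,'e) pre_digraph \<Rightarrow> bool" where
  "quiver_connected G \<longleftrightarrow> verts G \<noteq> {} \<and>
     (\<forall>x\<in>verts G. \<forall>y\<in>verts G. \<exists>w. is_walk G w \<and> fst w = x \<and> wend G w = y)"

definition no_oriented_cycles :: "('v,'e) pre_digraph \<Rightarrow> bool" where
  "no_oriented_cycles G \<longleftrightarrow> \<not> (\<exists>p. is_path G p \<and> snd p \<noteq> [] \<and> pend G p = fst p)"

definition walk_in :: "'e set \<Rightarrow> ('v,'e) walk \<Rightarrow> bool" where
  "walk_in T w \<longleftrightarrow> fst ` set (snd w) \<subseteq> T"

definition reduced_walk :: "('v,'e) walk \<Rightarrow> bool" where
  "reduced_walk w \<longleftrightarrow> (\<forall>i. Suc i < length (snd w) \<longrightarrow>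
      \<not> (fst (snd w ! i) = fst (snd w ! Suc i) \<and> snd (snd w ! i) \<noteq> snd (snd w ! Suc i)))"

definition forest :: "('v,'e) pre_digraph \<Rightarrow> 'e set \<Rightarrow> bool" where
  "forest G T \<longleftrightarrow> T \<subseteq> arcs G \<and>
     \<not> (\<exists>w. is_walk G w \<and> walk_in T w \<and> snd w \<noteq> [] \<and> wend G w = fst w \<and> reduced_walk w)"

definition maximal_tree :: "('v,'e) pre_digraph \<Rightarrow> 'e set \<Rightarrow> bool" where
  "maximal_tree G T \<longleftrightarrow> forest G T \<and> (\<forall>a\<in>arcs G - T. \<not> forest G (insert a T))"

definition tree_walk :: "('v,'e) pre_digraph \<Rightarrow> 'e set \<Rightarrow> 'v \<Rightarrow> 'v \<Rightarrow> ('v,'e) walk" where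
  "tree_walk G T x0 x = (SOME w. is_walk G w \<and> walk_in T w \<and> fst w = x0 \<and> wend G w = x \<and>
      (\<forall>w'. is_walk G w' \<and> walk_in T w' \<and> fst w' = x0 \<and> wend G w' = x \<longrightarrow>
             length (snd w) \<le> length (snd w')))"

text \<open>Elements of kQ are functions from paths to k supported on (valid) paths.
  The product is u v = u \<circ> v (v traversed first) for composable paths.\<close>

definition kQ :: "('v,'e) pre_digraph \<Rightarrow> (('v,'e) path \<Rightarrow> 'k::field) set" where
  "kQ G = {c. \<forall>p. c p \<noteq> 0 \<longrightarrow> is_path G p}"

definition pbasis :: "('v,'e) path \<Rightarrow> ('v,'e) path \<Rightarrow> 'k::field" where
  "pbasis p = (\<lambda>q. if q = p then 1 else 0)"

definition kQ_mult :: "('v,'e) pre_digraph \<Rightarrow> (('v,'e) path \<Rightarrow> 'k::field)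
     \<Rightarrow> (('v,'e) path \<Rightarrow> 'k) \<Rightarrow> (('v,'e) path \<Rightarrow> 'k)" where
  "kQ_mult G c d = (\<lambda>p. \<Sum>j\<le>length (snd p).
       c (pend G (fst p, take j (snd p)), drop j (snd p)) * d (fst p, take j (snd p)))"

definition kQ_one :: "('v,'e) pre_digraph \<Rightarrow> ('v,'e) path \<Rightarrow> 'k::field" where
  "kQ_one G = (\<lambda>p. if fst p \<in> verts G \<and> snd p = [] then 1 else 0)"

definition kQ_smult :: "'k::field \<Rightarrow> (('v,'e) path \<Rightarrow> 'k) \<Rightarrow> (('v,'e) path \<Rightarrow> 'k)" where
  "kQ_smult a c = (\<lambda>p. a * c p)"

definition arrow_ideal_pow :: "('v,'e) pre_digraph \<Rightarrow> nat \<Rightarrow> (('v,'e) path \<Rightarrow> 'k::field) set" where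
  "arrow_ideal_pow G m = {c \<in> kQ G. \<forall>p. c p \<noteq> 0 \<longrightarrow> length (snd p) \<ge> m}"

definition admissible :: "('v,'e) pre_digraph \<Rightarrow> (('v,'e) path \<Rightarrow> 'k::field) set \<Rightarrow> bool" where
  "admissible G I \<longleftrightarrow> (\<exists>N\<ge>2. arrow_ideal_pow G N \<subseteq> I \<and> I \<subseteq> arrow_ideal_pow G 2)"

definition k_algebra :: "('k::field \<Rightarrow> 'a::ring_1 \<Rightarrow> 'a) \<Rightarrow> bool" where
  "k_algebra scale \<longleftrightarrow>
     (\<forall>a x y. scale a (x + y) = scale a x + scale a y) \<and>
     (\<forall>a b x. scale (a + b) x = scale a x + scale b x) \<and>
     (\<forall>a b x. scale (a * b) x = scale a (scale b x)) \<and>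
     (\<forall>x. scale 1 x = x) \<and>
     (\<forall>a x y. scale a (x * y) = scale a x * y \<and> scale a (x * y) = x * scale a y)"

definition idempotent :: "'a::ring_1 \<Rightarrow> bool" where
  "idempotent e \<longleftrightarrow> e * e = e"

definition primitive_idempotent :: "'a::ring_1 \<Rightarrow> bool" where
  "primitive_idempotent e \<longleftrightarrow> idempotent e \<and> e \<noteq> 0 \<and>
     \<not> (\<exists>e1 e2. idempotent e1 \<and> idempotent e2 \<and> e1 \<noteq> 0 \<and> e2 \<noteq> 0 \<and>
          e1 * e2 = 0 \<and> e2 * e1 = 0 \<and> e = e1 + e2)"

definition complete_idempotents :: "('v,'e) pre_digraph \<Rightarrow> ('v \<Rightarrow> 'a::ring_1) \<Rightarrow> bool" where
  "complete_idempotents G eA \<longleftrightarrow>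
     (\<forall>i\<in>verts G. primitive_idempotent (eA i)) \<and>
     (\<forall>i\<in>verts G. \<forall>j\<in>verts G. i \<noteq> j \<longrightarrow> eA i * eA j = 0) \<and>
     (\<Sum>i\<in>verts G. eA i) = 1"

definition kQ_alg_hom :: "('v,'e) pre_digraph \<Rightarrow> ('k::field \<Rightarrow> 'a::ring_1 \<Rightarrow> 'a)
     \<Rightarrow> ((('v,'e) path \<Rightarrow> 'k) \<Rightarrow> 'a) \<Rightarrow> bool" where
  "kQ_alg_hom G scale \<nu> \<longleftrightarrow>
     (\<forall>c\<in>kQ G. \<forall>d\<in>kQ G. \<nu> (\<lambda>p. c p + d p) = \<nu> c + \<nu> d \<and> \<nu> (kQ_mult G c d) = \<nu> c * \<nu> d) \<and>
     (\<forall>a. \<forall>c\<in>kQ G. \<nu> (kQ_smult a c) = scale a (\<nu> c)) \<and>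
     \<nu> (kQ_one G) = 1"

definition kernel :: "('v,'e) pre_digraph \<Rightarrow> ((('v,'e) path \<Rightarrow> 'k::field) \<Rightarrow> 'a::ring_1)
     \<Rightarrow> (('v,'e) path \<Rightarrow> 'k) set" where
  "kernel G \<nu> = {c \<in> kQ G. \<nu> c = 0}"

definition presentation :: "('v,'e) pre_digraph \<Rightarrow> ('k::field \<Rightarrow> 'a::ring_1 \<Rightarrow> 'a)
     \<Rightarrow> ('v \<Rightarrow> 'a) \<Rightarrow> ((('v,'e) path \<Rightarrow> 'k) \<Rightarrow> 'a) \<Rightarrow> bool" where
  "presentation G scale eA \<nu> \<longleftrightarrow>
     kQ_alg_hom G scale \<nu> \<and> \<nu> ` kQ G = UNIV \<and> admissible G (kernel G \<nu>) \<and>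
     (\<forall>i\<in>verts G. \<nu> (pbasis (i, [])) = eA i)"

definition kQ_alg_aut :: "('v,'e) pre_digraph
     \<Rightarrow> ((('v,'e) path \<Rightarrow> 'k::field) \<Rightarrow> (('v,'e) path \<Rightarrow> 'k)) \<Rightarrow> bool" where
  "kQ_alg_aut G \<psi> \<longleftrightarrow> bij_betw \<psi> (kQ G) (kQ G) \<and>
     (\<forall>c\<in>kQ G. \<forall>d\<in>kQ G. \<psi> (\<lambda>p. c p + d p) = (\<lambda>p. \<psi> c p + \<psi> d p) \<and> \<psi> (kQ_mult G c d) = kQ_mult G (\<psi> c) (\<psi> d)) \<and>
     (\<forall>a. \<forall>c\<in>kQ G. \<psi> (kQ_smult a c) = kQ_smult a (\<psi> c)) \<and>
     \<psi> (kQ_one G) = kQ_one G"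

definition alg_aut :: "('k::field \<Rightarrow> 'a::ring_1 \<Rightarrow> 'a) \<Rightarrow> ('a \<Rightarrow> 'a) \<Rightarrow> bool" where
  "alg_aut scale \<phi> \<longleftrightarrow> bij \<phi> \<and> (\<forall>x y. \<phi> (x + y) = \<phi> x + \<phi> y \<and> \<phi> (x * y) = \<phi> x * \<phi> y) \<and>
     (\<forall>a x. \<phi> (scale a x) = scale a (\<phi> x)) \<and> \<phi> 1 = 1"

definition k_linear :: "('k::field \<Rightarrow> 'a::ring_1 \<Rightarrow> 'a) \<Rightarrow> ('a \<Rightarrow> 'a) \<Rightarrow> bool" where
  "k_linear scale d \<longleftrightarrow> (\<forall>x y. d (x + y) = d x + d y) \<and> (\<forall>a x. d (scale a x) = scale a (d x))"

definition Der0 :: "('v,'e) pre_digraph \<Rightarrow> ('k::field \<Rightarrow> 'a::ring_1 \<Rightarrow> 'a) \<Rightarrow> ('v \<Rightarrow> 'a)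
     \<Rightarrow> ('a \<Rightarrow> 'a) set" where
  "Der0 G scale eA = {d. k_linear scale d \<and> (\<forall>x y. d (x * y) = d x * y + x * d y) \<and>
                        (\<forall>i\<in>verts G. d (eA i) = 0)}"

definition Espan :: "('v,'e) pre_digraph \<Rightarrow> ('k::field \<Rightarrow> 'a::ring_1 \<Rightarrow> 'a) \<Rightarrow> ('v \<Rightarrow> 'a) \<Rightarrow> 'a set" where
  "Espan G scale eA = {(\<Sum>i\<in>verts G. scale (c i) (eA i)) | c. True}"

definition Int0 :: "('v,'e) pre_digraph \<Rightarrow> ('k::field \<Rightarrow> 'a::ring_1 \<Rightarrow> 'a) \<Rightarrow> ('v \<Rightarrow> 'a)
     \<Rightarrow> ('a \<Rightarrow> 'a) set" where
  "Int0 G scale eA = {(\<lambda>a. e * a - a * e) | e. e \<in> Espan G scale eA}"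

definition hh_class :: "('v,'e) pre_digraph \<Rightarrow> ('k::field \<Rightarrow> 'a::ring_1 \<Rightarrow> 'a) \<Rightarrow> ('v \<Rightarrow> 'a)
     \<Rightarrow> ('a \<Rightarrow> 'a) \<Rightarrow> ('a \<Rightarrow> 'a) set" where
  "hh_class G scale eA d = {d' \<in> Der0 G scale eA. (\<lambda>a. d' a - d a) \<in> Int0 G scale eA}"

definition HH1 :: "('v,'e) pre_digraph \<Rightarrow> ('k::field \<Rightarrow> 'a::ring_1 \<Rightarrow> 'a) \<Rightarrow> ('v \<Rightarrow> 'a)
     \<Rightarrow> ('a \<Rightarrow> 'a) set set" where
  "HH1 G scale eA = hh_class G scale eA ` Der0 G scale eA"

definition induced :: "('v,'e) pre_digraph \<Rightarrow> ('k::field \<Rightarrow> 'a::ring_1 \<Rightarrow> 'a) \<Rightarrow> ('v \<Rightarrow> 'a)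
     \<Rightarrow> ('a \<Rightarrow> 'a) \<Rightarrow> ('a \<Rightarrow> 'a) set \<Rightarrow> ('a \<Rightarrow> 'a) set" where
  "induced G scale eA \<phi> X = hh_class G scale eA (\<phi> \<circ> (SOME d. d \<in> X) \<circ> inv_into UNIV \<phi>)"

definition minimal_relation :: "('v,'e) pre_digraph \<Rightarrow> (('v,'e) path \<Rightarrow> 'k::field) set
     \<Rightarrow> (('v,'e) path \<Rightarrow> 'k) \<Rightarrow> bool" where
  "minimal_relation G I \<rho> \<longleftrightarrow> \<rho> \<in> I \<and> (\<exists>p. \<rho> p \<noteq> 0) \<and>
     (\<forall>S. S \<subset> {p. \<rho> p \<noteq> 0} \<and> S \<noteq> {} \<longrightarrow> (\<lambda>p. if p \<in> S then \<rho> p else 0) \<notin> I)"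

inductive walk_rel :: "('v,'e) pre_digraph \<Rightarrow> (('v,'e) path \<Rightarrow> 'k::field) set
     \<Rightarrow> ('v,'e) walk \<Rightarrow> ('v,'e) walk \<Rightarrow> bool" for G I where
  wr_refl: "is_walk G w \<Longrightarrow> walk_rel G I w w"
| wr_sym: "walk_rel G I w w' \<Longrightarrow> walk_rel G I w' w"
| wr_trans: "walk_rel G I w w' \<Longrightarrow> walk_rel G I w' w'' \<Longrightarrow> walk_rel G I w w''"
| wr_cancel1: "a \<in> arcs G \<Longrightarrow> walk_rel G I (head G a, [(a, False), (a, True)]) (head G a, [])"
| wr_cancel2: "a \<in> arcs G \<Longrightarrow> walk_rel G I (tail G a, [(a, True), (a, False)]) (tail G a, [])"
| wr_comp: "walk_rel G I w1 w1' \<Longrightarrow> walk_rel G I w2 w2' \<Longrightarrow>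
      wend G w1 = fst w2 \<Longrightarrow> wend G w1' = fst w2' \<Longrightarrow>
      walk_rel G I (wcomp w2 w1) (wcomp w2' w1')"
| wr_minrel: "minimal_relation G I \<rho> \<Longrightarrow> \<rho> p \<noteq> 0 \<Longrightarrow> \<rho> q \<noteq> 0 \<Longrightarrow>
      walk_rel G I (path_walk p) (path_walk q)"

definition walk_rel_set :: "('v,'e) pre_digraph \<Rightarrow> (('v,'e) path \<Rightarrow> 'k::field) set
     \<Rightarrow> (('v,'e) walk \<times> ('v,'e) walk) set" where
  "walk_rel_set G I = {(w, w'). walk_rel G I w w'}"

definition closed_walks :: "('v,'e) pre_digraph \<Rightarrow> 'v \<Rightarrow> ('v,'e) walk set" where
  "closed_walks G x0 = {w. is_walk G w \<and> fst w = x0 \<and> wend G w = x0}"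

definition wclass :: "('v,'e) pre_digraph \<Rightarrow> (('v,'e) path \<Rightarrow> 'k::field) set
     \<Rightarrow> ('v,'e) walk \<Rightarrow> ('v,'e) walk set" where
  "wclass G I w = walk_rel_set G I `` {w}"

definition pi1 :: "('v,'e) pre_digraph \<Rightarrow> (('v,'e) path \<Rightarrow> 'k::field) set \<Rightarrow> 'v
     \<Rightarrow> ('v,'e) walk set monoid" where
  "pi1 G I x0 = \<lparr> Congruence.partial_object.carrier = closed_walks G x0 // walk_rel_set G I,
                  Group.monoid.mult = (\<lambda>X Y. wclass G I (wcomp (SOME w. w \<in> X) (SOME w. w \<in> Y))),
                  Group.monoid.one = wclass G I (x0, []) \<rparr>"

definition kplus :: "'k::field monoid" where
  "kplus = \<lparr> Congruence.partial_object.carrier = UNIV, Group.monoid.mult = (+), Group.monoid.one = 0 \<rparr>"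

definition tilde :: "('v,'e) pre_digraph \<Rightarrow> ('k::field \<Rightarrow> 'a::ring_1 \<Rightarrow> 'a) \<Rightarrow> 'e set \<Rightarrow> 'v
     \<Rightarrow> ((('v,'e) path \<Rightarrow> 'k) \<Rightarrow> 'a) \<Rightarrow> (('v,'e) walk set \<Rightarrow> 'k) \<Rightarrow> 'a \<Rightarrow> 'a" where
  "tilde G scale T x0 \<nu> f = (THE d. k_linear scale d \<and>
     (\<forall>u. is_path G u \<longrightarrow>
        d (\<nu> (pbasis u)) =
          scale (f (wclass G (kernel G \<nu>)
                     (wcomp (winv G (tree_walk G T x0 (pend G u)))
                            (wcomp (path_walk u) (tree_walk G T x0 (fst u))))))
                (\<nu> (pbasis u))))"

definition theta :: "('v,'e) pre_digraph \<Rightarrow> ('k::field \<Rightarrow> 'a::ring_1 \<Rightarrow> 'a) \<Rightarrow> ('v \<Rightarrow> 'a)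
     \<Rightarrow> 'e set \<Rightarrow> 'v \<Rightarrow> ((('v,'e) path \<Rightarrow> 'k) \<Rightarrow> 'a) \<Rightarrow> (('v,'e) walk set \<Rightarrow> 'k)
     \<Rightarrow> ('a \<Rightarrow> 'a) set" where
  "theta G scale eA T x0 \<nu> f = hh_class G scale eA (tilde G scale T x0 \<nu> f)"

end

theory Submission
  imports Defs
begin

text \<open>For a character f of \<pi>_1(Q,I), weight each path u from x to y by
  f[\<gamma>_y^-1 u \<gamma>_x].  The tree walks cancel in the middle of a concatenation, so the weight is
  additive and multiplying each path by its weight is a derivation of kQ.  The paths of a
  minimal relation are homotopic, so this operator fixes every minimal relation up to a scalar;
  since a finitely supported element of I is a sum of minimal relations and long paths lie in I
  by admissibility, it preserves I and descends to a derivation of A.  This derivation is the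
  unique k-linear map with the prescribed values on paths, i.e. it is tilde f.

  Replacing \<nu> by \<mu> = \<nu> \<circ> \<psi> changes neither I, nor \<pi>_1(Q,I), nor the weights, while
  \<mu> = \<psi>bar \<circ> \<nu> on kQ.  Hence the derivation for \<mu> is the conjugate of the one for \<nu> by
  \<psi>bar, and passing to classes modulo inner derivations by elements of E, which \<psi>bar fixes,
  gives \<theta>_\<mu> = \<psi>bar_* \<circ> \<theta>_\<nu>.\<close>

definition inv_letter :: "'e \<times> bool \<Rightarrow> 'e \<times> bool" where
  "inv_letter l = (fst l, \<not> snd l)"

definition inv_letters :: "('e \<times> bool) list \<Rightarrow> ('e \<times> bool) list" where
  "inv_letters ls = rev (map (\<lambda>(a,b). (a, \<not> b)) ls)"

abbreviation forward_letters :: "'e list \<Rightarrow> ('e \<times> bool) list" where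
  "forward_letters xs \<equiv> map (\<lambda>a. (a, True)) xs"

lemma inv_letters_Nil [simp]: "inv_letters [] = []"
  by (simp add: inv_letters_def)

lemma inv_letters_Cons [simp]: "inv_letters (l # ls) = inv_letters ls @ [inv_letter l]"
  by (cases l) (simp add: inv_letters_def inv_letter_def)

lemma inv_letters_append [simp]: "inv_letters (xs @ ys) = inv_letters ys @ inv_letters xs"
  by (simp add: inv_letters_def)

lemma inv_letters_inv_letters [simp]: "inv_letters (inv_letters ls) = ls"
  by (induct ls) (auto simp: inv_letters_def rev_map comp_def split: prod.splits)

lemma lstart_inv_letter [simp]: "lstart G (inv_letter l) = lend G l"
  and lend_inv_letter [simp]: "lend G (inv_letter l) = lstart G l"
  and fst_inv_letter [simp]: "fst (inv_letter l) = fst l"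
  by (simp_all add: lstart_def lend_def inv_letter_def)

lemma wend_Nil [simp]: "wend G (x, []) = x"
  and wend_Cons [simp]: "wend G (x, l # ls) = wend G (lend G l, ls)"
  by (simp_all add: wend_def)

lemma wend_append: "wend G (x, xs @ ys) = wend G (wend G (x, xs), ys)"
  by (induct xs arbitrary: x) auto

lemma walk_ok_verts: "walk_ok G x ls \<Longrightarrow> x \<in> verts G"
  by (cases ls) auto

lemma walk_ok_wend: "walk_ok G x ls \<Longrightarrow> wend G (x, ls) \<in> verts G"
  by (induct ls arbitrary: x) auto

lemma walk_ok_append:
  "walk_ok G x (xs @ ys) \<longleftrightarrow> walk_ok G x xs \<and> walk_ok G (wend G (x, xs)) ys"
  by (induct xs arbitrary: x) (auto dest: walk_ok_verts)

lemma walk_ok_arcs: "walk_ok G y ls \<Longrightarrow> l \<in> set ls \<Longrightarrow> fst l \<in> arcs G"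
  by (induct ls arbitrary: y) auto

lemma walk_ok_inv_letters:
  "walk_ok G x ls \<Longrightarrow>
     walk_ok G (wend G (x, ls)) (inv_letters ls) \<and> wend G (wend G (x, ls), inv_letters ls) = x"
proof (induct ls arbitrary: x)
  case Nil
  then show ?case by simp
next
  case (Cons l ls)
  then have l: "x \<in> verts G" "fst l \<in> arcs G" "lstart G l = x" and ls: "walk_ok G (lend G l) ls"
    by auto
  from Cons(1)[OF ls] have ih: "walk_ok G (wend G (lend G l, ls)) (inv_letters ls)"
    "wend G (wend G (lend G l, ls), inv_letters ls) = lend G l" by auto
  have "walk_ok G (lend G l) [inv_letter l]"
    using l walk_ok_verts[OF ls] by simp
  then show ?case
    using ih l by (simp add: walk_ok_append wend_append)
qed

lemma winv_eq: "winv G w = (wend G w, inv_letters (snd w))"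
  by (simp add: winv_def inv_letters_def)

lemma is_walk_winv: "is_walk G w \<Longrightarrow> is_walk G (winv G w)"
  using walk_ok_inv_letters[of G "fst w" "snd w"] by (simp add: is_walk_def winv_eq)

lemma is_walk_wcomp:
  assumes "is_walk G w1" "is_walk G w2" "wend G w1 = fst w2"
  shows "is_walk G (wcomp w2 w1) \<and> wend G (wcomp w2 w1) = wend G w2 \<and> fst (wcomp w2 w1) = fst w1"
  using assms by (cases w1, cases w2) (simp add: is_walk_def wcomp_def walk_ok_append wend_append)

lemma lstart_lend_in_verts:
  assumes "wf_digraph G" "fst l \<in> arcs G"
  shows "lstart G l \<in> verts G" "lend G l \<in> verts G"
  using assms by (auto simp: lstart_def lend_def wf_digraph.tail_in_verts wf_digraph.head_in_verts)

section \<open>Homotopy of walks\<close>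

lemma walk_rel_in_context:
  assumes r: "walk_rel G I (v, m) (v, m')"
    and e: "wend G (v, m) = u" "wend G (v, m') = u"
    and A: "walk_ok G s A" "wend G (s, A) = v"
    and B: "walk_ok G u B"
  shows "walk_rel G I (s, A @ m @ B) (s, A @ m' @ B)"
proof -
  have rA: "walk_rel G I (s, A) (s, A)" using A by (intro wr_refl) (simp add: is_walk_def)
  have "walk_rel G I (wcomp (v, m) (s, A)) (wcomp (v, m') (s, A))"
    by (rule wr_comp[OF rA r]) (use A in auto)
  then have r1: "walk_rel G I (s, A @ m) (s, A @ m')" by (simp add: wcomp_def)
  have rB: "walk_rel G I (u, B) (u, B)" using B by (intro wr_refl) (simp add: is_walk_def)
  have "walk_rel G I (wcomp (u, B) (s, A @ m)) (wcomp (u, B) (s, A @ m'))"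
    by (rule wr_comp[OF r1 rB]) (use A e in \<open>auto simp: wend_append\<close>)
  then show ?thesis by (simp add: wcomp_def)
qed

lemma walk_rel_cancel_letter:
  assumes w: "walk_ok G x [l]"
  shows "walk_rel G I (x, [l, inv_letter l]) (x, [])"
proof -
  obtain a b where l: "l = (a, b)" by (cases l)
  have a: "a \<in> arcs G" using w l by simp
  show ?thesis
  proof (cases b)
    case True
    then have "x = tail G a" using w l by (simp add: lstart_def)
    then show ?thesis using wr_cancel2[OF a, of I] True l by (simp add: inv_letter_def)
  next
    case False
    then have "x = head G a" using w l by (simp add: lstart_def)
    then show ?thesis using wr_cancel1[OF a, of I] False l by (simp add: inv_letter_def)
  qed
qed

lemma walk_rel_cancel_right:
  "walk_ok G x ls \<Longrightarrow> walk_rel G I (x, ls @ inv_letters ls) (x, [])"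
proof (induct ls arbitrary: x)
  case Nil
  then show ?case by (auto intro: wr_refl simp: is_walk_def)
next
  case (Cons l ls)
  then have l: "x \<in> verts G" "fst l \<in> arcs G" "lstart G l = x" and ls: "walk_ok G (lend G l) ls"
    by auto
  have ih: "walk_rel G I (lend G l, ls @ inv_letters ls) (lend G l, [])" using Cons ls by blast
  have w1: "walk_ok G x [l]" and w2: "walk_ok G (lend G l) [inv_letter l]"
    using l walk_ok_verts[OF ls] by auto
  have e: "wend G (lend G l, ls @ inv_letters ls) = lend G l"
    using walk_ok_inv_letters[OF ls] by (simp add: wend_append)
  have "walk_rel G I (x, [l] @ (ls @ inv_letters ls) @ [inv_letter l]) (x, [l] @ [] @ [inv_letter l])"
    by (rule walk_rel_in_context[OF ih e _ w1 _ w2]) auto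
  then show ?case using walk_rel_cancel_letter[OF w1] wr_trans by fastforce
qed

lemma walk_rel_cancel_left:
  "walk_ok G x ls \<Longrightarrow> walk_rel G I (wend G (x, ls), inv_letters ls @ ls) (wend G (x, ls), [])"
  using walk_rel_cancel_right[of G "wend G (x, ls)" "inv_letters ls" I] walk_ok_inv_letters[of G x ls]
  by simp

lemma wclass_eqI: "walk_rel G I w w' \<Longrightarrow> wclass G I w = wclass G I w'"
  unfolding wclass_def walk_rel_set_def by (auto intro: wr_trans wr_sym)

lemma in_wclass_iff: "w' \<in> wclass G I w \<longleftrightarrow> walk_rel G I w w'"
  by (simp add: wclass_def walk_rel_set_def)

section \<open>Maximal trees span\<close>

definition tree_reach :: "('v,'e) pre_digraph \<Rightarrow> 'e set \<Rightarrow> 'v \<Rightarrow> 'v set" where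
  "tree_reach G T x0 = {y. \<exists>w. is_walk G w \<and> walk_in T w \<and> fst w = x0 \<and> wend G w = y}"

lemma tree_reach_root: "x0 \<in> verts G \<Longrightarrow> x0 \<in> tree_reach G T x0"
  unfolding tree_reach_def by (rule CollectI, rule exI[of _ "(x0, [])"]) (simp add: is_walk_def walk_in_def)

lemma tree_reach_letter:
  assumes wf: "wf_digraph G" and y: "y \<in> tree_reach G T x0" and l: "fst l \<in> T" "fst l \<in> arcs G"
    and st: "lstart G l = y"
  shows "lend G l \<in> tree_reach G T x0"
proof -
  obtain w where w: "is_walk G w" "walk_in T w" "fst w = x0" "wend G w = y"
    using y unfolding tree_reach_def by blast
  let ?w = "(x0, snd w @ [l])"
  have wl: "walk_ok G y [l]" using lstart_lend_in_verts[OF wf l(2)] st l by auto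
  have w0: "walk_ok G x0 (snd w)" and we: "wend G (x0, snd w) = y"
    using w by (cases w; simp add: is_walk_def)+
  have "is_walk G ?w" unfolding is_walk_def using w0 we wl by (simp add: walk_ok_append)
  moreover have "walk_in T ?w" using w l by (auto simp: walk_in_def)
  moreover have "wend G ?w = lend G l" using we by (simp add: wend_append)
  ultimately show ?thesis unfolding tree_reach_def by force
qed

lemma tree_reach_walk_iff:
  assumes "wf_digraph G" "walk_ok G y ls" "fst ` set ls \<subseteq> T"
  shows "y \<in> tree_reach G T x0 \<longleftrightarrow> wend G (y, ls) \<in> tree_reach G T x0"
  using assms(2,3)
proof (induct ls arbitrary: y)
  case Nil
  then show ?case by simp
next
  case (Cons l ls)
  then have l: "fst l \<in> arcs G" "lstart G l = y" "fst l \<in> T" and ls: "walk_ok G (lend G l) ls"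
    by auto
  have "y \<in> tree_reach G T x0 \<longleftrightarrow> lend G l \<in> tree_reach G T x0"
    using tree_reach_letter[OF assms(1) _ l(3,1,2)]
      tree_reach_letter[OF assms(1), of _ T x0 "inv_letter l"] l by auto
  then show ?case using Cons ls by simp
qed

lemma walk_exits_set:
  "walk_ok G y ls \<Longrightarrow> y \<in> R \<Longrightarrow> wend G (y, ls) \<notin> R \<Longrightarrow>
     \<exists>l\<in>set ls. lstart G l \<in> R \<and> lend G l \<notin> R"
proof (induct ls arbitrary: y)
  case Nil
  then show ?case by simp
next
  case (Cons l ls)
  then show ?case by (cases "lend G l \<in> R") auto
qed

lemma reduced_walk_infix:
  assumes "reduced_walk (v, A @ M @ B)"
  shows "reduced_walk (u, M)"
  unfolding reduced_walk_def
proof (intro allI impI)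
  fix i assume i: "Suc i < length (snd (u, M))"
  have "Suc (length A + i) < length (snd (v, A @ M @ B))" using i by simp
  then have "\<not> (fst ((A @ M @ B) ! (length A + i)) = fst ((A @ M @ B) ! Suc (length A + i)) \<and>
        snd ((A @ M @ B) ! (length A + i)) \<noteq> snd ((A @ M @ B) ! Suc (length A + i)))"
    using assms unfolding reduced_walk_def by (metis snd_conv)
  moreover have "(A @ M @ B) ! (length A + i) = M ! i" using i by (simp add: nth_append)
  moreover have "(A @ M @ B) ! Suc (length A + i) = M ! Suc i" using i
    by (simp add: nth_append del: append_assoc)
  ultimately show "\<not> (fst (snd (u, M) ! i) = fst (snd (u, M) ! Suc i) \<and>
      snd (snd (u, M) ! i) \<noteq> snd (snd (u, M) ! Suc i))"
    by simp
qed

lemma cut_arc_letter: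
  "(tail G a \<in> R) \<noteq> (head G a \<in> R) \<Longrightarrow> fst l = a \<Longrightarrow> (lstart G l \<in> R) \<noteq> (lend G l \<in> R)"
  by (auto simp: lstart_def lend_def)

lemma split_list_first_arc:
  assumes "a \<in> fst ` set ls"
  shows "\<exists>W1 s W2. ls = W1 @ s # W2 \<and> fst s = a \<and> a \<notin> fst ` set W1"
proof -
  have "\<exists>z\<in>set ls. fst z = a" using assms by auto
  then obtain W1 s W2 where "ls = W1 @ s # W2" "fst s = a" "\<forall>z\<in>set W1. fst z \<noteq> a"
    using split_list_first_prop[of ls "\<lambda>z. fst z = a"] by blast
  moreover have "a \<notin> fst ` set W1" using calculation(3) by force
  ultimately show ?thesis by blast
qed

text \<open>A closed walk crossing a cut arc must cross it back; between the first two crossings it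
  stays on one side, so it returns along the same letter reversed.\<close>
lemma closed_walk_through_cut_arc:
  assumes cut: "(tail G a \<in> R) \<noteq> (head G a \<in> R)"
    and T_closed: "\<And>y ls. walk_ok G y ls \<Longrightarrow> fst ` set ls \<subseteq> T \<Longrightarrow> (y \<in> R) = (wend G (y, ls) \<in> R)"
    and W: "walk_ok G v ls" "fst ` set ls \<subseteq> insert a T" "wend G (v, ls) = v" "a \<in> fst ` set ls"
  shows "\<exists>W1 s M W3. ls = W1 @ s # M @ inv_letter s # W3 \<and> fst ` set M \<subseteq> T \<and>
           walk_ok G (lend G s) M \<and> wend G (lend G s, M) = lend G s"
proof -
  obtain W1 s W2 where sp: "ls = W1 @ s # W2" "fst s = a" "a \<notin> fst ` set W1"
    using split_list_first_arc[OF W(4)] by blast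
  have in_T: "fst ` set xs \<subseteq> T" if "set xs \<subseteq> set ls" "a \<notin> fst ` set xs" for xs
  proof
    fix b assume b: "b \<in> fst ` set xs"
    then have "b \<in> fst ` set ls" using that(1) by blast
    then have "b \<in> insert a T" using W(2) by blast
    moreover have "b \<noteq> a" using b that(2) by blast
    ultimately show "b \<in> T" by simp
  qed
  have w1: "walk_ok G v W1" and s: "lstart G s = wend G (v, W1)" and w2: "walk_ok G (lend G s) W2"
    using W(1) sp(1) by (auto simp: walk_ok_append)
  have e2: "wend G (lend G s, W2) = v" using W(3) sp(1) by (simp add: wend_append)
  have "fst ` set W1 \<subseteq> T" by (rule in_T[OF _ sp(3)]) (auto simp: sp(1))
  then have s1: "(v \<in> R) = (lstart G s \<in> R)" using T_closed[OF w1] s by simp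
  have "a \<in> fst ` set W2"
  proof (rule ccontr)
    assume "a \<notin> fst ` set W2"
    then have "fst ` set W2 \<subseteq> T" by (rule in_T[rotated]) (auto simp: sp(1))
    then have "(lend G s \<in> R) = (v \<in> R)" using T_closed[OF w2] e2 by simp
    then show False using s1 cut_arc_letter[OF cut sp(2)] by simp
  qed
  then obtain M s' W3 where sp2: "W2 = M @ s' # W3" "fst s' = a" "a \<notin> fst ` set M"
    using split_list_first_arc[of a W2] by blast
  have wM: "walk_ok G (lend G s) M" and s': "lstart G s' = wend G (lend G s, M)"
    using w2 sp2(1) by (auto simp: walk_ok_append)
  have MT: "fst ` set M \<subseteq> T" by (rule in_T[OF _ sp2(3)]) (auto simp: sp(1) sp2(1))
  have s2: "(lend G s \<in> R) = (lstart G s' \<in> R)"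
    using T_closed[OF wM MT] s' by simp
  have "snd s' \<noteq> snd s"
  proof
    assume "snd s' = snd s"
    then have "s' = s" using sp(2) sp2(2) by (simp add: prod_eq_iff)
    then show False using s2 cut_arc_letter[OF cut sp(2)] by simp
  qed
  then have "s' = inv_letter s" using sp(2) sp2(2) by (simp add: inv_letter_def prod_eq_iff)
  then have "wend G (lend G s, M) = lend G s" using s' by simp
  moreover have "ls = W1 @ s # M @ inv_letter s # W3" using sp(1) sp2(1) \<open>s' = inv_letter s\<close> by simp
  ultimately show ?thesis using wM MT by blast
qed

lemma forest_no_reduced_cycle:
  assumes "forest G T" "walk_ok G u M" "fst ` set M \<subseteq> T" "M \<noteq> []" "wend G (u, M) = u"
  shows "\<not> reduced_walk (u, M)"
proof -
  have "\<not> (is_walk G (u, M) \<and> walk_in T (u, M) \<and> snd (u, M) \<noteq> [] \<and> wend G (u, M) = fst (u, M) \<and>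
      reduced_walk (u, M))"
    using assms(1) unfolding forest_def by blast
  then show ?thesis using assms(2-5) by (simp add: is_walk_def walk_in_def)
qed

lemma forest_insert_cut_arc:
  assumes forest: "forest G T" and a: "a \<in> arcs G"
    and cut: "(tail G a \<in> R) \<noteq> (head G a \<in> R)"
    and T_closed: "\<And>y ls. walk_ok G y ls \<Longrightarrow> fst ` set ls \<subseteq> T \<Longrightarrow> (y \<in> R) = (wend G (y, ls) \<in> R)"
  shows "forest G (insert a T)"
  unfolding forest_def
proof (intro conjI notI)
  show "insert a T \<subseteq> arcs G" using a forest by (simp add: forest_def)
next
  assume "\<exists>W. is_walk G W \<and> walk_in (insert a T) W \<and> snd W \<noteq> [] \<and> wend G W = fst W \<and> reduced_walk W"
  then obtain v ls where W: "walk_ok G v ls" "fst ` set ls \<subseteq> insert a T" "ls \<noteq> []"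
      "wend G (v, ls) = v" "reduced_walk (v, ls)"
    unfolding is_walk_def walk_in_def by auto
  have "a \<in> fst ` set ls"
  proof (rule ccontr)
    assume "a \<notin> fst ` set ls"
    then have "fst ` set ls \<subseteq> T" using W(2) by blast
    then show False using forest_no_reduced_cycle[OF forest W(1) _ W(3,4)] W(5) by blast
  qed
  then obtain W1 s M W3 where sp: "ls = W1 @ s # M @ inv_letter s # W3" "fst ` set M \<subseteq> T"
      "walk_ok G (lend G s) M" "wend G (lend G s, M) = lend G s"
    using closed_walk_through_cut_arc[OF cut T_closed W(1,2,4)] by blast
  show False
  proof (cases "M = []")
    case True
    have "ls ! length W1 = s" "ls ! Suc (length W1) = inv_letter s" "Suc (length W1) < length ls"
      using sp(1) True by (simp_all add: nth_append)
    moreover have "\<forall>i. Suc i < length ls \<longrightarrow>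
        \<not> (fst (ls ! i) = fst (ls ! Suc i) \<and> snd (ls ! i) \<noteq> snd (ls ! Suc i))"
      using W(5) unfolding reduced_walk_def by simp
    ultimately show False by (auto simp: inv_letter_def)
  next
    case False
    have "reduced_walk (lend G s, M)"
      using reduced_walk_infix[of v "W1 @ [s]" M "inv_letter s # W3"] W(5) sp(1) by simp
    then show False using forest_no_reduced_cycle[OF forest sp(3,2) False sp(4)] by blast
  qed
qed

lemma tree_reach_all:
  assumes wf: "wf_digraph G" and conn: "quiver_connected G" and mt: "maximal_tree G T"
    and x0: "x0 \<in> verts G" and x: "x \<in> verts G"
  shows "x \<in> tree_reach G T x0"
proof (rule ccontr)
  define R where "R = tree_reach G T x0"
  assume "x \<notin> tree_reach G T x0"
  then have xR: "x \<notin> R" by (simp add: R_def)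
  obtain w where "is_walk G w" "fst w = x0" "wend G w = x"
    using conn x0 x unfolding quiver_connected_def by blast
  then have w: "walk_ok G x0 (snd w)" "wend G (x0, snd w) = x"
    by (cases w; simp add: is_walk_def)+
  obtain l where l: "l \<in> set (snd w)" "lstart G l \<in> R" "lend G l \<notin> R"
    using walk_exits_set[OF w(1), of R] tree_reach_root[OF x0] xR w(2) unfolding R_def by blast
  define a where "a = fst l"
  have aA: "a \<in> arcs G" using walk_ok_arcs[OF w(1) l(1)] by (simp add: a_def)
  have aT: "a \<notin> T"
    using tree_reach_letter[OF wf, of "lstart G l" T x0 l] l aA unfolding R_def a_def by blast
  have cut: "(tail G a \<in> R) \<noteq> (head G a \<in> R)"
    using l by (auto simp: a_def lstart_def lend_def split: if_splits)
  have "forest G T" using mt by (simp add: maximal_tree_def)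
  then have "forest G (insert a T)"
  proof (rule forest_insert_cut_arc[OF _ aA cut])
    fix y ls assume "walk_ok G y ls" "fst ` set ls \<subseteq> T"
    then show "(y \<in> R) = (wend G (y, ls) \<in> R)" unfolding R_def by (rule tree_reach_walk_iff[OF wf])
  qed
  then show False using mt aA aT unfolding maximal_tree_def by blast
qed

lemma tree_walk:
  assumes wf: "wf_digraph G" and conn: "quiver_connected G" and mt: "maximal_tree G T"
    and x0: "x0 \<in> verts G" and x: "x \<in> verts G"
  shows "is_walk G (tree_walk G T x0 x) \<and> walk_in T (tree_walk G T x0 x) \<and>
         fst (tree_walk G T x0 x) = x0 \<and> wend G (tree_walk G T x0 x) = x"
proof -
  let ?P = "\<lambda>w. is_walk G w \<and> walk_in T w \<and> fst w = x0 \<and> wend G w = x"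
  obtain w where "?P w" using tree_reach_all[OF assms] unfolding tree_reach_def by blast
  then obtain w' where "?P w'" "\<forall>y. ?P y \<longrightarrow> length (snd w') \<le> length (snd y)"
    using ex_has_least_nat[of ?P w "\<lambda>w. length (snd w)"] by blast
  then have "\<exists>w. ?P w \<and> (\<forall>w'. ?P w' \<longrightarrow> length (snd w) \<le> length (snd w'))" by blast
  then have "?P (SOME w. ?P w \<and> (\<forall>w'. ?P w' \<longrightarrow> length (snd w) \<le> length (snd w')))"
    by (rule someI_ex[THEN conjunct1])
  then show ?thesis by (simp only: tree_walk_def conj_assoc)
qed

definition pcomp :: "('v,'e) path \<Rightarrow> ('v,'e) path \<Rightarrow> ('v,'e) path" where
  "pcomp p2 p1 = (fst p1, snd p1 @ snd p2)"

lemma is_path_iff: "is_path G p \<longleftrightarrow> walk_ok G (fst p) (forward_letters (snd p))"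
  by (simp add: is_path_def is_walk_def path_walk_def)

lemma pend_eq: "pend G p = wend G (fst p, forward_letters (snd p))"
  by (simp add: pend_def path_walk_def)

lemma is_path_ends: "is_path G u \<Longrightarrow> fst u \<in> verts G \<and> pend G u \<in> verts G"
  by (simp add: is_path_iff pend_eq walk_ok_verts walk_ok_wend)

lemma is_path_vertex: "i \<in> verts G \<Longrightarrow> is_path G (i, [])"
  by (simp add: is_path_iff)

lemma pcomp_path:
  assumes "is_path G p1" "is_path G p2" "pend G p1 = fst p2"
  shows "is_path G (pcomp p2 p1)" "pend G (pcomp p2 p1) = pend G p2"
  using assms by (auto simp: is_path_iff pend_eq pcomp_def walk_ok_append wend_append)

lemma pcomp_take_drop:
  "pcomp (pend G (fst p, take j (snd p)), drop j (snd p)) (fst p, take j (snd p)) = p"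
  by (simp add: pcomp_def)

lemma pbasis_kQ: "is_path G p \<Longrightarrow> pbasis p \<in> kQ G"
  by (simp add: kQ_def pbasis_def)

lemma kQ_path: "c \<in> kQ G \<Longrightarrow> c p \<noteq> 0 \<Longrightarrow> is_path G p"
  unfolding kQ_def by blast

lemma kQ_mult_kQ:
  assumes "c \<in> kQ G" "d \<in> kQ G"
  shows "kQ_mult G c d \<in> kQ G"
  unfolding kQ_def
proof (intro CollectI allI impI)
  fix p assume "kQ_mult G c d p \<noteq> 0"
  then obtain j where
    "c (pend G (fst p, take j (snd p)), drop j (snd p)) * d (fst p, take j (snd p)) \<noteq> 0"
    unfolding kQ_mult_def using sum.not_neutral_contains_not_neutral by blast
  then have "is_path G (fst p, take j (snd p))"
    and "is_path G (pend G (fst p, take j (snd p)), drop j (snd p))"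
    using kQ_path assms by (metis mult_not_zero)+
  then have "is_path G (pcomp (pend G (fst p, take j (snd p)), drop j (snd p)) (fst p, take j (snd p)))"
    by (rule pcomp_path(1)) simp
  then show "is_path G p" by (simp only: pcomp_take_drop)
qed

lemma kQ_add: "c \<in> kQ G \<Longrightarrow> d \<in> kQ G \<Longrightarrow> (\<lambda>p. c p + d p) \<in> kQ G"
  by (auto simp: kQ_def) (metis add.right_neutral)

lemma kQ_diff: "c \<in> kQ G \<Longrightarrow> d \<in> kQ G \<Longrightarrow> (\<lambda>p. c p - d p) \<in> kQ G"
  by (auto simp: kQ_def) (metis diff_self)

lemma kQ_smult: "c \<in> kQ G \<Longrightarrow> kQ_smult a c \<in> kQ G"
  by (auto simp: kQ_def kQ_smult_def)

lemma kQ_zero: "(\<lambda>p. 0) \<in> kQ G"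
  by (auto simp: kQ_def)

lemma kQ_restrict: "c \<in> kQ G \<Longrightarrow> (\<lambda>p. if P p then c p else 0) \<in> kQ G"
  by (auto simp: kQ_def)

lemma kQ_mult_vertex_left:
  "kQ_mult G (pbasis (y, [])) c = (\<lambda>p. if pend G p = y then c p else 0)"
proof (rule ext)
  fix p :: "('a,'b) path"
  let ?L = "length (snd p)"
  have "kQ_mult G (pbasis (y, [])) c p = (\<Sum>j\<le>?L. if j = ?L then (if pend G p = y then c p else 0) else 0)"
    unfolding kQ_mult_def by (rule sum.cong) (auto simp: pbasis_def)
  then show "kQ_mult G (pbasis (y, [])) c p = (if pend G p = y then c p else 0)" by simp
qed

lemma kQ_mult_vertex_right:
  "kQ_mult G c (pbasis (x, [])) = (\<lambda>p. if fst p = x then c p else 0)"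
proof (rule ext)
  fix p :: "('a,'b) path"
  let ?L = "length (snd p)"
  have "kQ_mult G c (pbasis (x, [])) p = (\<Sum>j\<le>?L. if j = 0 then (if fst p = x then c p else 0) else 0)"
    unfolding kQ_mult_def by (rule sum.cong) (cases p, auto simp: pbasis_def pend_def path_walk_def)
  then show "kQ_mult G c (pbasis (x, [])) p = (if fst p = x then c p else 0)" by simp
qed

lemma finite_short_paths:
  assumes "fin_digraph G"
  shows "finite {p. is_path G p \<and> length (snd p) < N}"
proof -
  have fv: "finite (verts G)" and fa: "finite (arcs G)"
    using assms by (auto simp: fin_digraph_def fin_digraph_axioms_def)
  have "{p. is_path G p \<and> length (snd p) < N} \<subseteq> verts G \<times> {xs. set xs \<subseteq> arcs G \<and> length xs \<le> N}"
  proof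
    fix p assume p: "p \<in> {p. is_path G p \<and> length (snd p) < N}"
    then have w: "walk_ok G (fst p) (forward_letters (snd p))" by (simp add: is_path_iff)
    have "set (snd p) \<subseteq> arcs G" using walk_ok_arcs[OF w] by fastforce
    then show "p \<in> verts G \<times> {xs. set xs \<subseteq> arcs G \<and> length xs \<le> N}"
      using p walk_ok_verts[OF w] by (cases p) auto
  qed
  moreover have "finite (verts G \<times> {xs. set xs \<subseteq> arcs G \<and> length xs \<le> N})"
    using fv fa by (simp add: finite_lists_length_le)
  ultimately show ?thesis by (rule finite_subset)
qed

lemma k_algebra_scale_add_left: "k_algebra scale \<Longrightarrow> scale (a + b) x = scale a x + scale b x"
  and k_algebra_scale_add_right: "k_algebra scale \<Longrightarrow> scale a (x + y) = scale a x + scale a y"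
  unfolding k_algebra_def by blast+

lemma scale_zero_left: "k_algebra scale \<Longrightarrow> scale 0 x = 0"
  using k_algebra_scale_add_left[of scale 0 0 x] by simp

lemma scale_zero_right: "k_algebra scale \<Longrightarrow> scale a 0 = 0"
  using k_algebra_scale_add_right[of scale a 0 0] by simp

lemma scale_diff_left: "k_algebra scale \<Longrightarrow> scale (a - b) x = scale a x - scale b x"
  using k_algebra_scale_add_left[of scale "a - b" b x] by (simp add: eq_diff_eq)

lemma Espan_I: "(\<Sum>i\<in>verts G. scale (c i) (eA i)) \<in> Espan G scale eA"
  unfolding Espan_def by blast

lemma Espan_diff:
  assumes k: "k_algebra scale" and "x \<in> Espan G scale eA" "y \<in> Espan G scale eA"
  shows "x - y \<in> Espan G scale eA"
proof -
  obtain c d where "x = (\<Sum>i\<in>verts G. scale (c i) (eA i))" "y = (\<Sum>i\<in>verts G. scale (d i) (eA i))"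
    using assms(2,3) unfolding Espan_def by blast
  then have "x - y = (\<Sum>i\<in>verts G. scale (c i - d i) (eA i))"
    by (simp add: scale_diff_left[OF k] sum_subtractf)
  then show ?thesis using Espan_I[where c = "\<lambda>i. c i - d i" and G = G and scale = scale and eA = eA] by simp
qed

lemma Espan_zero:
  assumes "k_algebra scale"
  shows "0 \<in> Espan G scale eA"
proof -
  have "(\<Sum>i\<in>verts G. scale 0 (eA i)) = 0" by (simp add: scale_zero_left[OF assms])
  then show ?thesis using Espan_I[where c = "\<lambda>i. 0" and G = G and scale = scale and eA = eA] by simp
qed

lemma Int0_diff:
  assumes k: "k_algebra scale" and u: "u \<in> Int0 G scale eA" and v: "v \<in> Int0 G scale eA"
  shows "(\<lambda>a. u a - v a) \<in> Int0 G scale eA"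
proof -
  obtain e1 e2 where e: "u = (\<lambda>a. e1 * a - a * e1)" "e1 \<in> Espan G scale eA"
      "v = (\<lambda>a. e2 * a - a * e2)" "e2 \<in> Espan G scale eA"
    using u v unfolding Int0_def by blast
  have "(\<lambda>a. u a - v a) = (\<lambda>a. (e1 - e2) * a - a * (e1 - e2))"
    unfolding e(1,3) by (simp add: algebra_simps)
  then show ?thesis using Espan_diff[OF k e(2,4)] unfolding Int0_def by blast
qed

lemma Int0_zero: "k_algebra scale \<Longrightarrow> (\<lambda>a. 0) \<in> Int0 G scale eA"
  unfolding Int0_def using Espan_zero[of scale G eA] by force

lemma hh_class_cong:
  assumes k: "k_algebra scale" and gh: "(\<lambda>a. g a - h a) \<in> Int0 G scale eA"
  shows "hh_class G scale eA g = hh_class G scale eA h"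
proof -
  have hg: "(\<lambda>a. h a - g a) \<in> Int0 G scale eA"
    using Int0_diff[OF k Int0_zero[OF k] gh] by simp
  show ?thesis unfolding hh_class_def
  proof (intro Collect_cong conj_cong refl iffI)
    fix d' assume "(\<lambda>a. d' a - g a) \<in> Int0 G scale eA"
    from Int0_diff[OF k this hg] show "(\<lambda>a. d' a - h a) \<in> Int0 G scale eA" by (simp add: algebra_simps)
  next
    fix d' assume "(\<lambda>a. d' a - h a) \<in> Int0 G scale eA"
    from Int0_diff[OF k this gh] show "(\<lambda>a. d' a - g a) \<in> Int0 G scale eA" by (simp add: algebra_simps)
  qed
qed

lemma mem_hh_class_self: "k_algebra scale \<Longrightarrow> d \<in> Der0 G scale eA \<Longrightarrow> d \<in> hh_class G scale eA d"
  unfolding hh_class_def using Int0_zero by simp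

lemma alg_aut_diff:
  assumes "alg_aut scale \<phi>"
  shows "\<phi> (x - y) = \<phi> x - \<phi> y"
proof -
  have "\<phi> x = \<phi> (x - y) + \<phi> y" using assms unfolding alg_aut_def by (metis diff_add_cancel)
  then show ?thesis by (simp add: eq_diff_eq)
qed

lemma alg_aut_Espan:
  assumes \<phi>: "alg_aut scale \<phi>" and fix_e: "\<forall>i\<in>verts G. \<phi> (eA i) = eA i"
    and e: "e \<in> Espan G scale eA"
  shows "\<phi> e \<in> Espan G scale eA"
proof -
  obtain c where c: "e = (\<Sum>i\<in>verts G. scale (c i) (eA i))" using e unfolding Espan_def by blast
  have hom: "\<phi> 0 = 0" "\<phi> (x + y) = \<phi> x + \<phi> y" for x y
    using alg_aut_diff[OF \<phi>, of 0 0] \<phi> unfolding alg_aut_def by simp_all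
  have "\<phi> e = (\<Sum>i\<in>verts G. \<phi> (scale (c i) (eA i)))"
    unfolding c by (rule sum_comp_morphism[symmetric, OF hom, unfolded comp_def])
  also have "\<dots> = (\<Sum>i\<in>verts G. scale (c i) (eA i))"
    by (rule sum.cong) (use \<phi> fix_e in \<open>simp_all add: alg_aut_def\<close>)
  finally show ?thesis by (simp only: Espan_I)
qed

text \<open>Conjugation by \<phi> turns the inner derivation by e into the inner derivation by \<phi> e,
  and \<phi> preserves E.\<close>
lemma induced_hh_class:
  assumes k: "k_algebra scale" and \<phi>: "alg_aut scale \<phi>" and fix_e: "\<forall>i\<in>verts G. \<phi> (eA i) = eA i"
    and d: "d \<in> Der0 G scale eA"
  shows "induced G scale eA \<phi> (hh_class G scale eA d)
       = hh_class G scale eA (\<phi> \<circ> d \<circ> inv_into UNIV \<phi>)"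
proof -
  let ?X = "hh_class G scale eA d" and ?inv = "inv_into UNIV \<phi>"
  define d' where "d' = (SOME d'. d' \<in> ?X)"
  have "d' \<in> ?X"
    unfolding d'_def by (rule someI[where P = "\<lambda>d'. d' \<in> ?X", OF mem_hh_class_self[OF k d]])
  then obtain e where e: "e \<in> Espan G scale eA" "(\<lambda>a. d' a - d a) = (\<lambda>a. e * a - a * e)"
    unfolding hh_class_def Int0_def by blast
  have inv: "\<phi> (?inv a) = a" for a
    using \<phi> by (simp add: alg_aut_def bij_def surj_f_inv_f)
  have mult: "\<phi> (x * y) = \<phi> x * \<phi> y" for x y
    using \<phi> unfolding alg_aut_def by blast
  have "(\<lambda>a. (\<phi> \<circ> d' \<circ> ?inv) a - (\<phi> \<circ> d \<circ> ?inv) a) = (\<lambda>a. \<phi> e * a - a * \<phi> e)"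
  proof (rule ext)
    fix a
    have "(\<phi> \<circ> d' \<circ> ?inv) a - (\<phi> \<circ> d \<circ> ?inv) a = \<phi> (d' (?inv a) - d (?inv a))"
      by (simp add: alg_aut_diff[OF \<phi>])
    also have "\<dots> = \<phi> (e * ?inv a - ?inv a * e)"
      using fun_cong[OF e(2), of "?inv a"] by simp
    also have "\<dots> = \<phi> e * a - a * \<phi> e"
      by (simp add: alg_aut_diff[OF \<phi>] mult inv)
    finally show "(\<phi> \<circ> d' \<circ> ?inv) a - (\<phi> \<circ> d \<circ> ?inv) a = \<phi> e * a - a * \<phi> e" .
  qed
  then have "(\<lambda>a. (\<phi> \<circ> d' \<circ> ?inv) a - (\<phi> \<circ> d \<circ> ?inv) a) \<in> Int0 G scale eA"
    using alg_aut_Espan[OF \<phi> fix_e e(1)] unfolding Int0_def by blast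
  then show ?thesis unfolding induced_def d'_def[symmetric] by (rule hh_class_cong[OF k])
qed

section \<open>The derivation attached to a character of the fundamental group\<close>

definition tree_loop :: "('v,'e) pre_digraph \<Rightarrow> 'e set \<Rightarrow> 'v \<Rightarrow> ('v,'e) path \<Rightarrow> ('v,'e) walk" where
  "tree_loop G T x0 u = wcomp (winv G (tree_walk G T x0 (pend G u)))
                          (wcomp (path_walk u) (tree_walk G T x0 (fst u)))"

definition path_weight :: "('v,'e) pre_digraph \<Rightarrow> (('v,'e) path \<Rightarrow> 'k::field) set \<Rightarrow> 'e set \<Rightarrow> 'v
    \<Rightarrow> (('v,'e) walk set \<Rightarrow> 'k) \<Rightarrow> ('v,'e) path \<Rightarrow> 'k" where
  "path_weight G I T x0 f u = f (wclass G I (tree_loop G T x0 u))"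

definition weight_op :: "('v,'e) pre_digraph \<Rightarrow> (('v,'e) path \<Rightarrow> 'k::field) set \<Rightarrow> 'e set \<Rightarrow> 'v
    \<Rightarrow> (('v,'e) walk set \<Rightarrow> 'k) \<Rightarrow> (('v,'e) path \<Rightarrow> 'k) \<Rightarrow> (('v,'e) path \<Rightarrow> 'k)" where
  "weight_op G I T x0 f c = (\<lambda>p. path_weight G I T x0 f p * c p)"

text \<open>Any preimage under \<rho> may be chosen: weight_op preserves the kernel
  (lemma weight_op_kernel below).\<close>
definition weight_derivation :: "('v,'e) pre_digraph \<Rightarrow> 'e set \<Rightarrow> 'v
    \<Rightarrow> ((('v,'e) path \<Rightarrow> 'k::field) \<Rightarrow> 'a::ring_1) \<Rightarrow> (('v,'e) walk set \<Rightarrow> 'k) \<Rightarrow> 'a \<Rightarrow> 'a" where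
  "weight_derivation G T x0 \<rho> f a = \<rho> (weight_op G (kernel G \<rho>) T x0 f (SOME c. c \<in> kQ G \<and> \<rho> c = a))"

locale quiver_presentation =
  fixes G :: "('v,'e) pre_digraph" and scale :: "'k::field \<Rightarrow> 'a::ring_1 \<Rightarrow> 'a"
    and eA :: "'v \<Rightarrow> 'a" and \<rho> :: "(('v,'e) path \<Rightarrow> 'k) \<Rightarrow> 'a" and T :: "'e set" and x0 :: 'v
  assumes fin: "fin_digraph G" and conn: "quiver_connected G" and mt: "maximal_tree G T"
    and x0: "x0 \<in> verts G" and kalg: "k_algebra scale" and pres: "presentation G scale eA \<rho>"
begin

abbreviation "I \<equiv> kernel G \<rho>"
abbreviation "\<gamma> x \<equiv> tree_walk G T x0 x"
abbreviation "weight f \<equiv> path_weight G I T x0 f"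
abbreviation "\<Phi> f \<equiv> weight_op G I T x0 f"
abbreviation "D f \<equiv> weight_derivation G T x0 \<rho> f"

lemma wf: "wf_digraph G"
  using fin unfolding fin_digraph_def by blast

lemma tree_walk_from_root:
  assumes "x \<in> verts G"
  shows "walk_ok G x0 (snd (\<gamma> x))" "wend G (x0, snd (\<gamma> x)) = x" "fst (\<gamma> x) = x0"
    "is_walk G (\<gamma> x)" "wend G (\<gamma> x) = x"
  using tree_walk[OF wf conn mt x0 assms] by (metis is_walk_def prod.collapse)+

lemma rho_add: "c \<in> kQ G \<Longrightarrow> d \<in> kQ G \<Longrightarrow> \<rho> (\<lambda>p. c p + d p) = \<rho> c + \<rho> d"
  and rho_mult: "c \<in> kQ G \<Longrightarrow> d \<in> kQ G \<Longrightarrow> \<rho> (kQ_mult G c d) = \<rho> c * \<rho> d"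
  and rho_smult: "c \<in> kQ G \<Longrightarrow> \<rho> (kQ_smult a c) = scale a (\<rho> c)"
  using pres unfolding presentation_def kQ_alg_hom_def by blast+

lemma rho_vertex: "i \<in> verts G \<Longrightarrow> \<rho> (pbasis (i, [])) = eA i"
  using pres unfolding presentation_def by blast

lemma rho_preimage: "\<exists>c. c \<in> kQ G \<and> \<rho> c = a"
  using pres unfolding presentation_def by (metis UNIV_I imageE)

lemma admissible_power: obtains N where "arrow_ideal_pow G N \<subseteq> I"
  using pres unfolding presentation_def admissible_def by blast

lemma rho_diff:
  assumes "c \<in> kQ G" "d \<in> kQ G"
  shows "\<rho> (\<lambda>p. c p - d p) = \<rho> c - \<rho> d"
  using rho_add[OF kQ_diff[OF assms] assms(2)] by (simp add: eq_diff_eq)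

lemma kernel_kQ: "c \<in> I \<Longrightarrow> c \<in> kQ G"
  and kernel_add: "c \<in> I \<Longrightarrow> d \<in> I \<Longrightarrow> (\<lambda>p. c p + d p) \<in> I"
  and kernel_diff: "c \<in> I \<Longrightarrow> d \<in> I \<Longrightarrow> (\<lambda>p. c p - d p) \<in> I"
  and kernel_smult: "c \<in> I \<Longrightarrow> kQ_smult a c \<in> I"
  and kernel_zero: "(\<lambda>p. 0) \<in> I"
  using rho_diff[OF kQ_zero kQ_zero]
  by (auto simp: kernel_def kQ_add kQ_diff kQ_smult kQ_zero rho_add rho_diff rho_smult
      scale_zero_right[OF kalg])

lemma kernel_diffI: "c \<in> kQ G \<Longrightarrow> d \<in> kQ G \<Longrightarrow> \<rho> c = \<rho> d \<Longrightarrow> (\<lambda>p. c p - d p) \<in> I"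
  by (simp add: kernel_def kQ_diff rho_diff)

text \<open>Cutting a minimal relation down to the paths from its own start to its own end stays in I,
  so by minimality all its paths are parallel.\<close>
lemma minimal_relation_parallel:
  assumes m: "minimal_relation G I r" and p: "r p \<noteq> 0" and q: "r q \<noteq> 0"
  shows "fst q = fst p \<and> pend G q = pend G p"
proof -
  let ?x = "fst p" and ?y = "pend G p"
  have rI: "r \<in> I" using m by (simp add: minimal_relation_def)
  have px: "is_path G (?x, [])" and py: "is_path G (?y, [])"
    using is_path_ends[OF kQ_path[OF kernel_kQ[OF rI] p]] by (auto intro: is_path_vertex)
  define r' where "r' = kQ_mult G (pbasis (?y, [])) (kQ_mult G r (pbasis (?x, [])))"
  have r: "r \<in> kQ G" "\<rho> r = 0" using rI by (simp_all add: kernel_def)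
  have "kQ_mult G r (pbasis (?x, [])) \<in> kQ G" "\<rho> (kQ_mult G r (pbasis (?x, []))) = 0"
    using kQ_mult_kQ[OF r(1) pbasis_kQ[OF px]] rho_mult[OF r(1) pbasis_kQ[OF px]] r(2) by simp_all
  then have "r' \<in> I"
    using kQ_mult_kQ[OF pbasis_kQ[OF py]] rho_mult[OF pbasis_kQ[OF py]]
    unfolding r'_def kernel_def by simp
  moreover define S where "S = {q. r q \<noteq> 0 \<and> fst q = ?x \<and> pend G q = ?y}"
  moreover have "r' = (\<lambda>q. if q \<in> S then r q else 0)"
    unfolding r'_def kQ_mult_vertex_left kQ_mult_vertex_right S_def by (auto intro!: ext)
  moreover have "S \<subseteq> {q. r q \<noteq> 0}" "S \<noteq> {}" using p unfolding S_def by blast+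
  ultimately have "S = {q. r q \<noteq> 0}" using m unfolding minimal_relation_def by blast
  then show ?thesis using q S_def by blast
qed

lemma walk_rel_ends:
  "walk_rel G I w w' \<Longrightarrow> is_walk G w \<and> is_walk G w' \<and> fst w = fst w' \<and> wend G w = wend G w'"
proof (induct rule: walk_rel.induct)
  case (wr_cancel1 a)
  then show ?case
    using wf_digraph.tail_in_verts[OF wf wr_cancel1] wf_digraph.head_in_verts[OF wf wr_cancel1]
    by (simp add: is_walk_def lstart_def lend_def)
next
  case (wr_cancel2 a)
  then show ?case
    using wf_digraph.tail_in_verts[OF wf wr_cancel2] wf_digraph.head_in_verts[OF wf wr_cancel2]
    by (simp add: is_walk_def lstart_def lend_def)
next
  case (wr_comp w1 w1' w2 w2')
  then show ?case using is_walk_wcomp[of G w1 w2] is_walk_wcomp[of G w1' w2'] by simp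
next
  case (wr_minrel r p q)
  have rI: "r \<in> I" using wr_minrel(1) by (simp add: minimal_relation_def)
  have "is_path G p" "is_path G q" using kQ_path[OF kernel_kQ[OF rI]] wr_minrel(2,3) by auto
  moreover have "fst q = fst p" "pend G q = pend G p"
    using minimal_relation_parallel[OF wr_minrel] by simp_all
  ultimately show ?case unfolding is_path_def pend_def path_walk_def by simp
qed simp_all

lemma pi1_mult_wclass:
  assumes w1: "w1 \<in> closed_walks G x0" and w2: "w2 \<in> closed_walks G x0"
  shows "wclass G I w1 \<otimes>\<^bsub>pi1 G I x0\<^esub> wclass G I w2 = wclass G I (wcomp w1 w2)"
proof -
  have r1: "walk_rel G I w1 w1" "walk_rel G I w2 w2"
    using w1 w2 by (auto intro: wr_refl simp: closed_walks_def)
  define a where "a = (SOME w. w \<in> wclass G I w1)"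
  define b where "b = (SOME w. w \<in> wclass G I w2)"
  have ra: "walk_rel G I w1 a" unfolding a_def in_wclass_iff[symmetric]
    by (rule someI[of _ w1]) (simp add: in_wclass_iff r1)
  have rb: "walk_rel G I w2 b" unfolding b_def in_wclass_iff[symmetric]
    by (rule someI[of _ w2]) (simp add: in_wclass_iff r1)
  have "walk_rel G I (wcomp w1 w2) (wcomp a b)"
    by (rule wr_comp[OF rb ra]) (use w1 w2 walk_rel_ends[OF ra] walk_rel_ends[OF rb] in
        \<open>auto simp: closed_walks_def\<close>)
  then show ?thesis unfolding pi1_def a_def b_def by (simp add: wclass_eqI)
qed

lemma hom_wclass_wcomp:
  assumes f: "f \<in> hom (pi1 G I x0) kplus"
    and w1: "w1 \<in> closed_walks G x0" and w2: "w2 \<in> closed_walks G x0"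
  shows "f (wclass G I (wcomp w1 w2)) = f (wclass G I w1) + f (wclass G I w2)"
proof -
  have carrier: "wclass G I w \<in> carrier (pi1 G I x0)" if "w \<in> closed_walks G x0" for w
    using that unfolding pi1_def wclass_def by (simp add: quotientI)
  have "f (wclass G I w1 \<otimes>\<^bsub>pi1 G I x0\<^esub> wclass G I w2) = f (wclass G I w1) + f (wclass G I w2)"
    using f carrier[OF w1] carrier[OF w2] unfolding hom_def kplus_def by simp
  then show ?thesis using pi1_mult_wclass[OF w1 w2] by simp
qed

lemma hom_wclass_unit:
  assumes f: "f \<in> hom (pi1 G I x0) kplus"
  shows "f (wclass G I (x0, [])) = 0"
proof -
  have c: "(x0, []) \<in> closed_walks G x0" using x0 by (simp add: closed_walks_def is_walk_def)
  have "f (wclass G I (x0, [])) = f (wclass G I (x0, [])) + f (wclass G I (x0, []))"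
    using hom_wclass_wcomp[OF f c c] by (simp only: wcomp_def fst_conv snd_conv append_Nil)
  then show ?thesis by (rule add_cancel_right_right[THEN iffD1])
qed

lemma tree_loop_eq:
  assumes u: "is_path G u"
  shows "tree_loop G T x0 u
       = (x0, snd (\<gamma> (fst u)) @ forward_letters (snd u) @ inv_letters (snd (\<gamma> (pend G u))))"
  using tree_walk_from_root(3)[OF conjunct1[OF is_path_ends[OF u]]]
  unfolding tree_loop_def winv_eq wcomp_def path_walk_def by simp

lemma tree_loop_closed:
  assumes u: "is_path G u"
  shows "tree_loop G T x0 u \<in> closed_walks G x0"
proof -
  have v: "fst u \<in> verts G" "pend G u \<in> verts G" using is_path_ends[OF u] by auto
  have "walk_ok G (fst u) (forward_letters (snd u))" "wend G (fst u, forward_letters (snd u)) = pend G u"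
    using u by (simp_all add: is_path_iff pend_eq)
  then show ?thesis
    using tree_walk_from_root[OF v(1)] tree_walk_from_root[OF v(2)]
      walk_ok_inv_letters[OF tree_walk_from_root(1)[OF v(2)]]
    unfolding tree_loop_eq[OF u] closed_walks_def is_walk_def
    by (simp add: walk_ok_append wend_append)
qed

lemma path_weight_vertex:
  assumes f: "f \<in> hom (pi1 G I x0) kplus" and i: "i \<in> verts G"
  shows "weight f (i, []) = 0"
proof -
  have "walk_rel G I (x0, snd (\<gamma> i) @ inv_letters (snd (\<gamma> i))) (x0, [])"
    by (rule walk_rel_cancel_right[OF tree_walk_from_root(1)[OF i]])
  then have "wclass G I (tree_loop G T x0 (i, [])) = wclass G I (x0, [])"
    unfolding tree_loop_eq[OF is_path_vertex[OF i]] by (simp add: pend_eq wclass_eqI)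
  then show ?thesis unfolding path_weight_def using hom_wclass_unit[OF f] by simp
qed

text \<open>The tree walk to the middle vertex cancels against its inverse.\<close>
lemma path_weight_pcomp:
  assumes f: "f \<in> hom (pi1 G I x0) kplus" and p1: "is_path G p1" and p2: "is_path G p2"
    and e: "pend G p1 = fst p2"
  shows "weight f (pcomp p2 p1) = weight f p2 + weight f p1"
proof -
  have pc: "is_path G (pcomp p2 p1)" "pend G (pcomp p2 p1) = pend G p2"
    using pcomp_path[OF p1 p2 e] by auto
  let ?x = "fst p1" and ?y = "fst p2" and ?z = "pend G p2"
  have v: "?x \<in> verts G" "?y \<in> verts G" "?z \<in> verts G"
    using is_path_ends[OF p1] is_path_ends[OF p2] by auto
  let ?gx = "snd (\<gamma> ?x)" and ?gy = "snd (\<gamma> ?y)" and ?gz = "snd (\<gamma> ?z)"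
  let ?A = "?gx @ forward_letters (snd p1)" and ?B = "forward_letters (snd p2) @ inv_letters ?gz"
  have wc: "wcomp (tree_loop G T x0 p2) (tree_loop G T x0 p1) = (x0, ?A @ (inv_letters ?gy @ ?gy) @ ?B)"
    unfolding wcomp_def tree_loop_eq[OF p1] tree_loop_eq[OF p2] e by simp
  have wp: "tree_loop G T x0 (pcomp p2 p1) = (x0, ?A @ [] @ ?B)"
    unfolding tree_loop_eq[OF pc(1)] pc(2) by (simp add: pcomp_def)
  have cancel: "walk_rel G I (?y, inv_letters ?gy @ ?gy) (?y, [])"
    using walk_rel_cancel_left[OF tree_walk_from_root(1)[OF v(2)]] tree_walk_from_root(2)[OF v(2)]
    by simp
  have A: "walk_ok G x0 ?A" "wend G (x0, ?A) = ?y"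
    using tree_walk_from_root[OF v(1)] p1 e by (auto simp: walk_ok_append wend_append is_path_iff pend_eq)
  have B: "walk_ok G ?y ?B"
    using p2 walk_ok_inv_letters[OF tree_walk_from_root(1)[OF v(3)]] tree_walk_from_root(2)[OF v(3)]
    by (auto simp: walk_ok_append is_path_iff pend_eq)
  have "wend G (?y, inv_letters ?gy @ ?gy) = ?y"
    using walk_ok_inv_letters[OF tree_walk_from_root(1)[OF v(2)]] tree_walk_from_root(2)[OF v(2)]
    by (simp add: wend_append)
  then have "walk_rel G I (x0, ?A @ (inv_letters ?gy @ ?gy) @ ?B) (x0, ?A @ [] @ ?B)"
    by (rule walk_rel_in_context[OF cancel _ _ A B]) simp
  then have "wclass G I (wcomp (tree_loop G T x0 p2) (tree_loop G T x0 p1))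
           = wclass G I (tree_loop G T x0 (pcomp p2 p1))"
    unfolding wc wp by (rule wclass_eqI)
  then show ?thesis
    using hom_wclass_wcomp[OF f tree_loop_closed[OF p2] tree_loop_closed[OF p1]]
    unfolding path_weight_def by simp
qed

lemma path_weight_minimal_relation:
  assumes m: "minimal_relation G I r" and p: "r p \<noteq> 0" and q: "r q \<noteq> 0"
  shows "weight f q = weight f p"
proof -
  have ends: "fst q = fst p" "pend G q = pend G p" using minimal_relation_parallel[OF m p q] by auto
  have rI: "r \<in> I" using m by (simp add: minimal_relation_def)
  have pp: "is_path G p" "is_path G q" using kQ_path[OF kernel_kQ[OF rI]] p q by auto
  have v: "fst p \<in> verts G" "pend G p \<in> verts G" using is_path_ends[OF pp(1)] by auto
  have r0: "walk_rel G I (path_walk p) (path_walk q)" by (rule wr_minrel[OF m p q])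
  have rg: "walk_rel G I (\<gamma> (fst p)) (\<gamma> (fst p))"
    using tree_walk_from_root(4)[OF v(1)] by (rule wr_refl)
  have r1: "walk_rel G I (wcomp (path_walk p) (\<gamma> (fst p))) (wcomp (path_walk q) (\<gamma> (fst p)))"
    by (rule wr_comp[OF rg r0]) (use tree_walk_from_root(5)[OF v(1)] ends in \<open>simp_all add: path_walk_def\<close>)
  have rh: "walk_rel G I (winv G (\<gamma> (pend G p))) (winv G (\<gamma> (pend G p)))"
    using is_walk_winv[OF tree_walk_from_root(4)[OF v(2)]] by (rule wr_refl)
  have "wend G (wcomp (path_walk u) (\<gamma> (fst p))) = pend G p"
    if "is_path G u" "fst u = fst p" "pend G u = pend G p" for u
    using is_walk_wcomp[OF tree_walk_from_root(4)[OF v(1)], of "path_walk u"] that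
      tree_walk_from_root(5)[OF v(1)]
    by (simp add: is_path_def path_walk_def pend_def)
  then have "walk_rel G I (tree_loop G T x0 p) (tree_loop G T x0 q)"
    unfolding tree_loop_def ends using pp ends tree_walk_from_root(5)[OF v(2)]
    by (intro wr_comp[OF r1 rh]) (simp_all add: winv_eq)
  then show ?thesis unfolding path_weight_def using wclass_eqI by metis
qed

lemma weight_op_kQ: "c \<in> kQ G \<Longrightarrow> \<Phi> f c \<in> kQ G"
  by (auto simp: kQ_def weight_op_def)

lemma weight_op_add: "\<Phi> f (\<lambda>p. c p + d p) = (\<lambda>p. \<Phi> f c p + \<Phi> f d p)"
  and weight_op_diff: "\<Phi> f (\<lambda>p. c p - d p) = (\<lambda>p. \<Phi> f c p - \<Phi> f d p)"
  by (simp_all add: weight_op_def ring_distribs)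

lemma weight_op_smult: "\<Phi> f (kQ_smult a c) = kQ_smult a (\<Phi> f c)"
  by (simp add: weight_op_def kQ_smult_def mult.left_commute)

lemma weight_op_pbasis: "\<Phi> f (pbasis u) = kQ_smult (weight f u) (pbasis u)"
  by (simp add: weight_op_def kQ_smult_def pbasis_def fun_eq_iff)

lemma weight_op_arrow_ideal_pow: "c \<in> arrow_ideal_pow G N \<Longrightarrow> \<Phi> f c \<in> arrow_ideal_pow G N"
  by (auto simp: arrow_ideal_pow_def weight_op_kQ) (auto simp: weight_op_def)

text \<open>A finitely supported element of I is a sum of minimal relations, on each of which the
  weight is constant.\<close>
lemma weight_op_kernel_finite:
  assumes f: "f \<in> hom (pi1 G I x0) kplus"
  shows "c \<in> I \<Longrightarrow> finite {p. c p \<noteq> 0} \<Longrightarrow> \<Phi> f c \<in> I"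
proof (induct "card {p. c p \<noteq> 0}" arbitrary: c rule: less_induct)
  case less
  show ?case
  proof (cases "\<exists>p. c p \<noteq> 0")
    case False
    then have "\<Phi> f c = (\<lambda>p. 0)" by (auto simp: weight_op_def)
    then show ?thesis using kernel_zero by simp
  next
    case True
    then obtain p0 where p0: "c p0 \<noteq> 0" by blast
    show ?thesis
    proof (cases "minimal_relation G I c")
      case True
      have "\<Phi> f c = kQ_smult (weight f p0) c"
        using path_weight_minimal_relation[OF True p0]
        by (auto simp: weight_op_def kQ_smult_def fun_eq_iff)
      then show ?thesis using kernel_smult[OF less(2)] by simp
    next
      case False
      then obtain S where S: "S \<subset> {p. c p \<noteq> 0}" "S \<noteq> {}" "(\<lambda>p. if p \<in> S then c p else 0) \<in> I"
        using less(2) p0 unfolding minimal_relation_def by blast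
      define c1 where "c1 = (\<lambda>p. if p \<in> S then c p else 0)"
      define c2 where "c2 = (\<lambda>p. c p - c1 p)"
      have c1I: "c1 \<in> I" using S c1_def by simp
      have c2I: "c2 \<in> I" unfolding c2_def by (rule kernel_diff[OF less(2) c1I])
      have fS: "finite S" using finite_subset[OF psubset_imp_subset[OF S(1)] less(3)] .
      have "{p. c1 p \<noteq> 0} = S" using S(1) by (auto simp: c1_def)
      moreover have "card S < card {p. c p \<noteq> 0}" using less(3) S(1) by (rule psubset_card_mono)
      ultimately have i1: "\<Phi> f c1 \<in> I" using less(1)[of c1] c1I fS by simp
      have "{p. c2 p \<noteq> 0} = {p. c p \<noteq> 0} - S" using S(1) by (auto simp: c2_def c1_def)
      moreover have "card ({p. c p \<noteq> 0} - S) < card {p. c p \<noteq> 0}"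
        using card_Diff_subset[OF fS psubset_imp_subset[OF S(1)]] \<open>card S < card {p. c p \<noteq> 0}\<close>
          card_gt_0_iff[of S] fS S(2) by linarith
      ultimately have i2: "\<Phi> f c2 \<in> I" using less(1)[of c2] c2I less(3) by simp
      have "c = (\<lambda>p. c1 p + c2 p)" by (simp add: c2_def)
      then have "\<Phi> f c = (\<lambda>p. \<Phi> f c1 p + \<Phi> f c2 p)" using weight_op_add by metis
      then show ?thesis using kernel_add[OF i1 i2] by simp
    qed
  qed
qed

lemma split_short_long:
  assumes c: "c \<in> kQ G" and N: "arrow_ideal_pow G N \<subseteq> I"
  obtains s l where "c = (\<lambda>p. s p + l p)" "s \<in> kQ G" "finite {p. s p \<noteq> 0}"
    "l \<in> arrow_ideal_pow G N" "l \<in> I"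
proof
  let ?s = "\<lambda>p. if length (snd p) < N then c p else 0"
  let ?l = "\<lambda>p. if length (snd p) < N then 0 else c p"
  show "c = (\<lambda>p. ?s p + ?l p)" by (simp add: fun_eq_iff)
  show "?s \<in> kQ G" by (rule kQ_restrict[OF c])
  have "{p. ?s p \<noteq> 0} \<subseteq> {p. is_path G p \<and> length (snd p) < N}"
    using kQ_path[OF c] by auto
  then show "finite {p. ?s p \<noteq> 0}" by (rule finite_subset[OF _ finite_short_paths[OF fin]])
  show "?l \<in> arrow_ideal_pow G N"
    using kQ_path[OF c] unfolding arrow_ideal_pow_def kQ_def by auto
  then show "?l \<in> I" using N by blast
qed

text \<open>Paths of length at least N already lie in I (admissibility), and so do their reweightings;
  the finitely many shorter ones are handled by the finite case.\<close>
lemma weight_op_kernel: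
  assumes f: "f \<in> hom (pi1 G I x0) kplus" and c: "c \<in> I"
  shows "\<Phi> f c \<in> I"
proof -
  obtain N where N: "arrow_ideal_pow G N \<subseteq> I" by (rule admissible_power)
  obtain s l where sl: "c = (\<lambda>p. s p + l p)" "finite {p. s p \<noteq> 0}"
      "l \<in> arrow_ideal_pow G N" "l \<in> I"
    using split_short_long[OF kernel_kQ[OF c] N] by blast
  have "s = (\<lambda>p. c p - l p)" using sl(1) by (simp add: fun_eq_iff)
  then have "s \<in> I" using kernel_diff[OF c sl(4)] by simp
  then have "\<Phi> f s \<in> I" by (rule weight_op_kernel_finite[OF f _ sl(2)])
  moreover have "\<Phi> f l \<in> I" using N weight_op_arrow_ideal_pow[OF sl(3)] by (rule subsetD)
  ultimately have "(\<lambda>p. \<Phi> f s p + \<Phi> f l p) \<in> I" by (rule kernel_add)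
  then show ?thesis by (simp only: sl(1) weight_op_add)
qed

lemma weight_derivation_eq:
  assumes f: "f \<in> hom (pi1 G I x0) kplus" and c: "c \<in> kQ G"
  shows "D f (\<rho> c) = \<rho> (\<Phi> f c)"
proof -
  define c' where "c' = (SOME c'. c' \<in> kQ G \<and> \<rho> c' = \<rho> c)"
  have c': "c' \<in> kQ G" "\<rho> c' = \<rho> c"
    unfolding c'_def using someI[of "\<lambda>c'. c' \<in> kQ G \<and> \<rho> c' = \<rho> c" c] c by auto
  have "\<Phi> f (\<lambda>p. c' p - c p) \<in> I" by (rule weight_op_kernel[OF f kernel_diffI[OF c'(1) c c'(2)]])
  then have "\<rho> (\<Phi> f c') - \<rho> (\<Phi> f c) = 0"
    unfolding weight_op_diff using rho_diff[OF weight_op_kQ[OF c'(1)] weight_op_kQ[OF c]]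
    by (simp add: kernel_def)
  then show ?thesis unfolding weight_derivation_def c'_def[symmetric] by simp
qed

lemma weight_derivation_linear:
  assumes f: "f \<in> hom (pi1 G I x0) kplus"
  shows "k_linear scale (D f)"
  unfolding k_linear_def
proof (intro conjI allI)
  fix x y
  obtain c where c: "c \<in> kQ G" "\<rho> c = x" using rho_preimage by blast
  obtain d where d: "d \<in> kQ G" "\<rho> d = y" using rho_preimage by blast
  have "D f (x + y) = D f (\<rho> (\<lambda>p. c p + d p))" using rho_add[OF c(1) d(1)] c d by simp
  also have "\<dots> = \<rho> (\<lambda>p. \<Phi> f c p + \<Phi> f d p)"
    by (simp add: weight_derivation_eq[OF f kQ_add[OF c(1) d(1)]] weight_op_add)
  also have "\<dots> = D f x + D f y"
    using rho_add[OF weight_op_kQ[OF c(1)] weight_op_kQ[OF d(1)]]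
      weight_derivation_eq[OF f c(1)] weight_derivation_eq[OF f d(1)] c d by simp
  finally show "D f (x + y) = D f x + D f y" .
next
  fix a x
  obtain c where c: "c \<in> kQ G" "\<rho> c = x" using rho_preimage by blast
  have "D f (scale a x) = D f (\<rho> (kQ_smult a c))" using rho_smult[OF c(1)] c by simp
  also have "\<dots> = \<rho> (kQ_smult a (\<Phi> f c))"
    by (simp add: weight_derivation_eq[OF f kQ_smult[OF c(1)]] weight_op_smult)
  also have "\<dots> = scale a (D f x)"
    using rho_smult[OF weight_op_kQ[OF c(1)]] weight_derivation_eq[OF f c(1)] c by simp
  finally show "D f (scale a x) = scale a (D f x)" .
qed

lemma weight_op_mult:
  assumes f: "f \<in> hom (pi1 G I x0) kplus" and c: "c \<in> kQ G" and d: "d \<in> kQ G"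
  shows "\<Phi> f (kQ_mult G c d) = (\<lambda>p. kQ_mult G (\<Phi> f c) d p + kQ_mult G c (\<Phi> f d) p)"
proof (rule ext)
  fix p :: "('v,'e) path"
  let ?p1 = "\<lambda>j. (fst p, take j (snd p))"
  let ?p2 = "\<lambda>j. (pend G (fst p, take j (snd p)), drop j (snd p))"
  have "weight f p * (c (?p2 j) * d (?p1 j))
      = (weight f (?p2 j) * c (?p2 j)) * d (?p1 j) + c (?p2 j) * (weight f (?p1 j) * d (?p1 j))" for j
  proof (cases "c (?p2 j) = 0 \<or> d (?p1 j) = 0")
    case False
    then have "is_path G (?p1 j)" "is_path G (?p2 j)" using kQ_path c d by blast+
    then have "weight f (pcomp (?p2 j) (?p1 j)) = weight f (?p2 j) + weight f (?p1 j)"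
      by (rule path_weight_pcomp[OF f]) simp
    then have "weight f p = weight f (?p2 j) + weight f (?p1 j)"
      by (simp only: pcomp_take_drop)
    then show ?thesis by (simp add: algebra_simps)
  qed auto
  then show "\<Phi> f (kQ_mult G c d) p = kQ_mult G (\<Phi> f c) d p + kQ_mult G c (\<Phi> f d) p"
    unfolding weight_op_def kQ_mult_def sum_distrib_left sum.distrib[symmetric] by simp
qed

lemma weight_derivation_leibniz:
  assumes f: "f \<in> hom (pi1 G I x0) kplus"
  shows "D f (x * y) = D f x * y + x * D f y"
proof -
  obtain c where c: "c \<in> kQ G" "\<rho> c = x" using rho_preimage by blast
  obtain d where d: "d \<in> kQ G" "\<rho> d = y" using rho_preimage by blast
  have "D f (x * y) = \<rho> (\<Phi> f (kQ_mult G c d))"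
    using weight_derivation_eq[OF f kQ_mult_kQ[OF c(1) d(1)]] rho_mult[OF c(1) d(1)] c d by simp
  also have "\<dots> = \<rho> (kQ_mult G (\<Phi> f c) d) + \<rho> (kQ_mult G c (\<Phi> f d))"
    unfolding weight_op_mult[OF f c(1) d(1)]
    by (rule rho_add[OF kQ_mult_kQ[OF weight_op_kQ[OF c(1)] d(1)] kQ_mult_kQ[OF c(1) weight_op_kQ[OF d(1)]]])
  also have "\<dots> = D f x * y + x * D f y"
    using rho_mult[OF weight_op_kQ[OF c(1)] d(1)] rho_mult[OF c(1) weight_op_kQ[OF d(1)]]
      weight_derivation_eq[OF f c(1)] weight_derivation_eq[OF f d(1)] c d by simp
  finally show ?thesis .
qed

lemma weight_derivation_pbasis:
  assumes f: "f \<in> hom (pi1 G I x0) kplus" and u: "is_path G u"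
  shows "D f (\<rho> (pbasis u)) = scale (weight f u) (\<rho> (pbasis u))"
  using weight_derivation_eq[OF f pbasis_kQ[OF u]] rho_smult[OF pbasis_kQ[OF u]]
  by (simp only: weight_op_pbasis)

lemma weight_derivation_Der0:
  assumes f: "f \<in> hom (pi1 G I x0) kplus"
  shows "D f \<in> Der0 G scale eA"
  unfolding Der0_def
proof (intro CollectI conjI allI ballI)
  show "k_linear scale (D f)" by (rule weight_derivation_linear[OF f])
  show "D f (x * y) = D f x * y + x * D f y" for x y by (rule weight_derivation_leibniz[OF f])
  show "D f (eA i) = 0" if i: "i \<in> verts G" for i
    using weight_derivation_pbasis[OF f is_path_vertex[OF i]] path_weight_vertex[OF f i]
      rho_vertex[OF i] scale_zero_left[OF kalg] by simp
qed

lemma linear_zero: "k_linear scale d \<Longrightarrow> d 0 = 0"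
  unfolding k_linear_def by (metis add_cancel_right_right add_0)

lemma linear_eq_on_finite_support:
  assumes l1: "k_linear scale d1" and l2: "k_linear scale d2"
    and eq: "\<And>u. is_path G u \<Longrightarrow> d1 (\<rho> (pbasis u)) = d2 (\<rho> (pbasis u))"
  shows "finite S \<Longrightarrow> c \<in> kQ G \<Longrightarrow> {p. c p \<noteq> 0} \<subseteq> S \<Longrightarrow> d1 (\<rho> c) = d2 (\<rho> c)"
proof (induct S arbitrary: c rule: finite_induct)
  case empty
  then have "c = (\<lambda>p. 0)" by auto
  moreover have "\<rho> (\<lambda>p. 0) = 0" using rho_diff[OF kQ_zero kQ_zero] by simp
  ultimately show ?case using linear_zero[OF l1] linear_zero[OF l2] by simp
next
  case (insert q S)
  show ?case
  proof (cases "c q = 0")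
    case True
    then show ?thesis using insert by auto
  next
    case False
    then have q: "is_path G q" using kQ_path[OF insert(4)] by blast
    define c' where "c' = (\<lambda>p. if p \<noteq> q then c p else 0)"
    have c': "c' \<in> kQ G" unfolding c'_def by (rule kQ_restrict[OF insert(4)])
    have "{p. c' p \<noteq> 0} \<subseteq> S" using insert(5) by (auto simp: c'_def)
    then have h: "d1 (\<rho> c') = d2 (\<rho> c')" by (rule insert(3)[OF c'])
    have "\<rho> c = \<rho> (\<lambda>p. c' p + kQ_smult (c q) (pbasis q) p)"
      by (rule arg_cong[where f = \<rho>]) (auto simp: c'_def kQ_smult_def pbasis_def)
    also have "\<dots> = \<rho> c' + scale (c q) (\<rho> (pbasis q))"
      using rho_add[OF c' kQ_smult[OF pbasis_kQ[OF q]]] rho_smult[OF pbasis_kQ[OF q]] by simp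
    finally have "\<rho> c = \<rho> c' + scale (c q) (\<rho> (pbasis q))" .
    then show ?thesis using h eq[OF q] l1 l2 unfolding k_linear_def by simp
  qed
qed

lemma linear_eq_on_paths:
  assumes l1: "k_linear scale d1" and l2: "k_linear scale d2"
    and eq: "\<And>u. is_path G u \<Longrightarrow> d1 (\<rho> (pbasis u)) = d2 (\<rho> (pbasis u))"
  shows "d1 = d2"
proof
  fix a
  obtain c where c: "c \<in> kQ G" "\<rho> c = a" using rho_preimage by blast
  obtain N where N: "arrow_ideal_pow G N \<subseteq> I" by (rule admissible_power)
  obtain s l where sl: "c = (\<lambda>p. s p + l p)" "s \<in> kQ G" "finite {p. s p \<noteq> 0}" "l \<in> I"
    using split_short_long[OF c(1) N] by blast
  have "a = \<rho> s + \<rho> l" using rho_add[OF sl(2) kernel_kQ[OF sl(4)]] sl(1) c(2) by simp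
  then have "a = \<rho> s" using sl(4) by (simp add: kernel_def)
  then show "d1 a = d2 a" using linear_eq_on_finite_support[OF l1 l2 eq sl(3,2)] by blast
qed

lemma tilde_eq_weight_derivation:
  assumes f: "f \<in> hom (pi1 G I x0) kplus"
  shows "tilde G scale T x0 \<rho> f = D f"
  unfolding tilde_def
proof (rule the_equality)
  show "k_linear scale (D f) \<and> (\<forall>u. is_path G u \<longrightarrow> D f (\<rho> (pbasis u)) =
      scale (f (wclass G I (wcomp (winv G (\<gamma> (pend G u))) (wcomp (path_walk u) (\<gamma> (fst u))))))
        (\<rho> (pbasis u)))"
    using weight_derivation_linear[OF f] weight_derivation_pbasis[OF f]
    unfolding path_weight_def tree_loop_def by blast
next
  fix d assume "k_linear scale d \<and> (\<forall>u. is_path G u \<longrightarrow> d (\<rho> (pbasis u)) =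
      scale (f (wclass G I (wcomp (winv G (\<gamma> (pend G u))) (wcomp (path_walk u) (\<gamma> (fst u))))))
        (\<rho> (pbasis u)))"
  then show "d = D f"
    using weight_derivation_linear[OF f] weight_derivation_pbasis[OF f]
    by (intro linear_eq_on_paths) (auto simp: path_weight_def tree_loop_def)
qed

end

section \<open>Twisting a presentation by an automorphism of kQ\<close>

lemma kernel_comp_kQ_aut:
  assumes \<psi>: "kQ_alg_aut G \<psi>" and stable: "\<psi> ` kernel G \<nu> = kernel G \<nu>"
  shows "kernel G (\<nu> \<circ> \<psi>) = kernel G \<nu>"
proof -
  have bij: "bij_betw \<psi> (kQ G) (kQ G)" using \<psi> unfolding kQ_alg_aut_def by blast
  have "c \<in> kernel G \<nu>" if c: "c \<in> kernel G (\<nu> \<circ> \<psi>)" for c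
  proof -
    have "\<psi> c \<in> \<psi> ` kernel G \<nu>"
      using c bij stable by (auto simp: kernel_def bij_betw_def)
    then obtain c' where "c' \<in> kernel G \<nu>" "\<psi> c = \<psi> c'" by blast
    then show ?thesis using c bij unfolding bij_betw_def inj_on_def kernel_def by auto
  qed
  moreover have "c \<in> kernel G (\<nu> \<circ> \<psi>)" if c: "c \<in> kernel G \<nu>" for c
  proof -
    have "\<psi> c \<in> kernel G \<nu>" using c stable by blast
    then show ?thesis using c by (simp add: kernel_def)
  qed
  ultimately show ?thesis by blast
qed

lemma presentation_comp_kQ_aut:
  assumes \<nu>: "presentation G scale eA \<nu>" and \<psi>: "kQ_alg_aut G \<psi>"
    and fix_e: "\<forall>i\<in>verts G. \<psi> (pbasis (i, [])) = pbasis (i, [])"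
    and stable: "\<psi> ` kernel G \<nu> = kernel G \<nu>"
  shows "presentation G scale eA (\<nu> \<circ> \<psi>)"
proof -
  have \<psi>_kQ: "\<psi> ` kQ G = kQ G" using \<psi> unfolding kQ_alg_aut_def bij_betw_def by blast
  have \<psi>_kQ': "\<psi> c \<in> kQ G" if "c \<in> kQ G" for c using \<psi>_kQ that by blast
  have \<psi>_add: "\<psi> (\<lambda>p. c p + d p) = (\<lambda>p. \<psi> c p + \<psi> d p)"
    and \<psi>_mult: "\<psi> (kQ_mult G c d) = kQ_mult G (\<psi> c) (\<psi> d)"
    if "c \<in> kQ G" "d \<in> kQ G" for c d
    using \<psi> that unfolding kQ_alg_aut_def by blast+
  have \<psi>_smult: "\<psi> (kQ_smult a c) = kQ_smult a (\<psi> c)" if "c \<in> kQ G" for a c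
    using \<psi> that unfolding kQ_alg_aut_def by blast
  have \<psi>_one: "\<psi> (kQ_one G) = kQ_one G" using \<psi> unfolding kQ_alg_aut_def by blast
  have \<nu>_add: "\<nu> (\<lambda>p. c p + d p) = \<nu> c + \<nu> d" and \<nu>_mult: "\<nu> (kQ_mult G c d) = \<nu> c * \<nu> d"
    if "c \<in> kQ G" "d \<in> kQ G" for c d
    using \<nu> that unfolding presentation_def kQ_alg_hom_def by blast+
  have \<nu>_smult: "\<nu> (kQ_smult a c) = scale a (\<nu> c)" if "c \<in> kQ G" for a c
    using \<nu> that unfolding presentation_def kQ_alg_hom_def by blast
  have \<nu>_one: "\<nu> (kQ_one G) = 1" using \<nu> unfolding presentation_def kQ_alg_hom_def by blast
  have "kQ_alg_hom G scale (\<nu> \<circ> \<psi>)"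
    unfolding kQ_alg_hom_def
    by (simp add: \<psi>_kQ' \<psi>_add \<psi>_mult \<psi>_smult \<psi>_one \<nu>_add \<nu>_mult \<nu>_smult \<nu>_one
        kQ_add kQ_mult_kQ kQ_smult)
  moreover have "(\<nu> \<circ> \<psi>) ` kQ G = \<nu> ` (\<psi> ` kQ G)" by (rule image_comp[symmetric])
  then have "(\<nu> \<circ> \<psi>) ` kQ G = UNIV" using \<nu> \<psi>_kQ by (simp add: presentation_def)
  ultimately show ?thesis
    using \<nu> fix_e kernel_comp_kQ_aut[OF \<psi> stable] by (simp add: presentation_def)
qed

lemma weight_derivation_twist:
  assumes \<nu>: "quiver_presentation G scale eA \<nu> T x0" and \<mu>: "quiver_presentation G scale eA \<mu> T x0"
    and ker: "kernel G \<mu> = kernel G \<nu>" and \<phi>: "bij \<phi>" and \<phi>\<nu>: "\<forall>c\<in>kQ G. \<phi> (\<nu> c) = \<mu> c"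
    and f: "f \<in> hom (pi1 G (kernel G \<nu>) x0) kplus"
  shows "weight_derivation G T x0 \<mu> f = \<phi> \<circ> weight_derivation G T x0 \<nu> f \<circ> inv_into UNIV \<phi>"
proof
  fix a
  let ?\<Phi> = "weight_op G (kernel G \<nu>) T x0 f"
  obtain c where c: "c \<in> kQ G" "\<nu> c = inv_into UNIV \<phi> a"
    using quiver_presentation.rho_preimage[OF \<nu>] by blast
  have a: "a = \<mu> c" using c \<phi>\<nu> \<phi> by (metis bij_def surj_f_inv_f)
  have "weight_derivation G T x0 \<mu> f a = \<mu> (?\<Phi> c)"
    using quiver_presentation.weight_derivation_eq[OF \<mu> _ c(1), of f] f ker a by simp
  also have "\<dots> = \<phi> (\<nu> (?\<Phi> c))"
    using \<phi>\<nu> quiver_presentation.weight_op_kQ[OF \<nu> c(1)] by simp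
  also have "\<dots> = \<phi> (weight_derivation G T x0 \<nu> f (inv_into UNIV \<phi> a))"
    using quiver_presentation.weight_derivation_eq[OF \<nu> f c(1)] c(2) by simp
  finally show "weight_derivation G T x0 \<mu> f a = (\<phi> \<circ> weight_derivation G T x0 \<nu> f \<circ> inv_into UNIV \<phi>) a"
    by simp
qed

lemma theta_twist:
  assumes \<nu>: "quiver_presentation G scale eA \<nu> T x0" and \<mu>: "quiver_presentation G scale eA \<mu> T x0"
    and ker: "kernel G \<mu> = kernel G \<nu>" and \<phi>: "alg_aut scale \<phi>" and \<phi>\<nu>: "\<forall>c\<in>kQ G. \<phi> (\<nu> c) = \<mu> c"
    and f: "f \<in> hom (pi1 G (kernel G \<nu>) x0) kplus"
  shows "theta G scale eA T x0 \<mu> f = induced G scale eA \<phi> (theta G scale eA T x0 \<nu> f)"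
proof -
  have fix_e: "\<forall>i\<in>verts G. \<phi> (eA i) = eA i"
  proof
    fix i assume i: "i \<in> verts G"
    have "\<phi> (\<nu> (pbasis (i, []))) = \<mu> (pbasis (i, []))"
      using \<phi>\<nu> pbasis_kQ[OF is_path_vertex[OF i]] by blast
    then show "\<phi> (eA i) = eA i"
      using quiver_presentation.rho_vertex[OF \<nu> i] quiver_presentation.rho_vertex[OF \<mu> i] by simp
  qed
  have f\<mu>: "f \<in> hom (pi1 G (kernel G \<mu>) x0) kplus" using f ker by simp
  have bij: "bij \<phi>" using \<phi> by (simp add: alg_aut_def)
  have "theta G scale eA T x0 \<mu> f = hh_class G scale eA (weight_derivation G T x0 \<mu> f)"
    unfolding theta_def by (simp only: quiver_presentation.tilde_eq_weight_derivation[OF \<mu> f\<mu>])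
  also have "\<dots> = hh_class G scale eA (\<phi> \<circ> weight_derivation G T x0 \<nu> f \<circ> inv_into UNIV \<phi>)"
    by (simp only: weight_derivation_twist[OF \<nu> \<mu> ker bij \<phi>\<nu> f])
  also have "\<dots> = induced G scale eA \<phi> (hh_class G scale eA (weight_derivation G T x0 \<nu> f))"
    by (rule induced_hh_class[symmetric, OF quiver_presentation.kalg[OF \<nu>] \<phi> fix_e
          quiver_presentation.weight_derivation_Der0[OF \<nu> f]])
  also have "\<dots> = induced G scale eA \<phi> (theta G scale eA T x0 \<nu> f)"
    unfolding theta_def by (simp only: quiver_presentation.tilde_eq_weight_derivation[OF \<nu> f])
  finally show ?thesis .
qed

theorem proposition3p3:
  fixes G :: "('v,'e) pre_digraph"
    and scale :: "'k::field \<Rightarrow> 'a::ring_1 \<Rightarrow> 'a"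
    and eA :: "'v \<Rightarrow> 'a"
    and \<nu> :: "(('v,'e) path \<Rightarrow> 'k) \<Rightarrow> 'a"
    and \<psi> :: "(('v,'e) path \<Rightarrow> 'k) \<Rightarrow> (('v,'e) path \<Rightarrow> 'k)"
    and \<psi>bar :: "'a \<Rightarrow> 'a"
    and T :: "'e set" and x0 :: 'v
  assumes "alg_closed TYPE('k)"
    and "fin_digraph G" and "quiver_connected G" and "no_oriented_cycles G"
    and "k_algebra scale" and "complete_idempotents G eA"
    and "presentation G scale eA \<nu>"
    and "kQ_alg_aut G \<psi>"
    and "\<forall>i\<in>verts G. \<psi> (pbasis (i, [])) = pbasis (i, [])"
    and "\<psi> ` kernel G \<nu> = kernel G \<nu>"
    and "alg_aut scale \<psi>bar"
    and "\<forall>c\<in>kQ G. \<psi>bar ((\<nu> \<circ> \<psi>) c) = (\<nu> \<circ> \<psi>) (\<psi> c)"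
    and "maximal_tree G T" and "x0 \<in> verts G"
  shows "(\<forall>f\<in>hom (pi1 G (kernel G \<nu>) x0) kplus.
            theta G scale eA T x0 (\<nu> \<circ> \<psi>) f
              = induced G scale eA \<psi>bar (theta G scale eA T x0 \<nu> f))
       \<and> theta G scale eA T x0 (\<nu> \<circ> \<psi>) ` hom (pi1 G (kernel G \<nu>) x0) kplus
          = induced G scale eA \<psi>bar ` (theta G scale eA T x0 \<nu> ` hom (pi1 G (kernel G \<nu>) x0) kplus)"
proof -
  have ker: "kernel G (\<nu> \<circ> \<psi>) = kernel G \<nu>"
    by (rule kernel_comp_kQ_aut[OF assms(8,10)])
  have \<nu>: "quiver_presentation G scale eA \<nu> T x0"
    using assms(2,3,5,7,13,14) by (simp add: quiver_presentation_def)
  have \<mu>: "quiver_presentation G scale eA (\<nu> \<circ> \<psi>) T x0"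
    using assms(2,3,5,13,14) presentation_comp_kQ_aut[OF assms(7-10)]
    by (simp add: quiver_presentation_def)
  have "\<psi>bar (\<nu> c) = (\<nu> \<circ> \<psi>) c" if "c \<in> kQ G" for c
  proof -
    have "c \<in> \<psi> ` kQ G" using that assms(8) unfolding kQ_alg_aut_def bij_betw_def by blast
    then obtain c0 where "c0 \<in> kQ G" "c = \<psi> c0" by blast
    then show ?thesis using assms(12) by simp
  qed
  then have twist: "theta G scale eA T x0 (\<nu> \<circ> \<psi>) f = induced G scale eA \<psi>bar (theta G scale eA T x0 \<nu> f)"
    if "f \<in> hom (pi1 G (kernel G \<nu>) x0) kplus" for f
    using theta_twist[OF \<nu> \<mu> ker assms(11) _ that] by blast
  then show ?thesis by (simp add: image_image cong: image_cong)
qed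

end
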